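(* Uniformly in $z \geq 1$, \[ \sum_{\substack{m_1, m_2 \leq z\\ (m_1, m_2) = 1}} \frac{t(m_1)t(m_2)\,m_1m_2}{\max(m_1,m_2)^3} \gg \frac{1}{\log z}\left( \sum_{m \leq z} \frac{t(m)}{\sqrt{m}} \right)^2.\] In particular, if $\log z > 3 \lambda \log \log \lambda$, then \[ \sum_{\substack{m_1, m_2 \leq z\\ (m_1, m_2) = 1}} \frac{t(m_1)t(m_2)\,m_1m_2}{\max(m_1,m_2)^3}\geq \exp\left((1 + o(1))\frac{\lambda}{\log \lambda}\right), \qquad x\to\infty.\]
   Context: Let $x$ be large and $\lambda = \sqrt{\log x \log\log x}$. Define the multiplicative function $r$ by $r(p) = \frac{\lambda}{\sqrt{p}\log p}$ for primes $\lambda^2 \le p \le \exp((\log\lambda)^2)$, $r(p)=0$ for other primes, and $r(p^n)=0$ for $n\ge2$. Define the multiplicative function $t$ by $t(p^n) = \frac{r(p^n)}{1+r(p^n)^2}$. *)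

theory Defs
  imports "HOL-Computational_Algebra.Primes" "HOL-Analysis.Analysis"
begin

definition lam :: "real \<Rightarrow> real" where
  "lam x = sqrt (ln x * ln (ln x))"

definition r_pp :: "real \<Rightarrow> nat \<Rightarrow> nat \<Rightarrow> real" where
  "r_pp x p k = (if k = 1 \<and> lam x ^ 2 \<le> real p \<and> real p \<le> exp ((ln (lam x))^2)
                 then lam x / (sqrt (real p) * ln (real p)) else 0)"

definition r_fun :: "real \<Rightarrow> nat \<Rightarrow> real" where
  "r_fun x m = (\<Prod>p\<in>prime_factors m. r_pp x p (multiplicity p m))"

definition t_pp :: "real \<Rightarrow> nat \<Rightarrow> nat \<Rightarrow> real" where
  "t_pp x p k = r_pp x p k / (1 + (r_pp x p k)^2)"

definition t_fun :: "real \<Rightarrow> nat \<Rightarrow> real" where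
  "t_fun x m = (\<Prod>p\<in>prime_factors m. t_pp x p (multiplicity p m))"

end

theory Submission
  imports Defs "HOL-Number_Theory.Prime_Powers" "HOL-Computational_Algebra.Squarefree"
    "HOL-Real_Asymp.Real_Asymp"
begin

text \<open>
  Group the pairs \<open>(m\<^sub>1, m\<^sub>2)\<close> by dyadic blocks. Within a block \<open>max(m\<^sub>1, m\<^sub>2)\<^sup>3 \<le> 4 m\<^sub>1 m\<^sub>2 \<surd>(m\<^sub>1 m\<^sub>2)\<close>,
  so Cauchy--Schwarz over the \<open>O(log z)\<close> blocks bounds \<open>(\<Sum> t(m)/\<surd>m)\<^sup>2\<close> by \<open>log z\<close> times the sum over
  all pairs. Since \<open>t\<close> is multiplicative and supported on square-free numbers, writing
  \<open>m\<^sub>i = d n\<^sub>i\<close> with \<open>d = gcd(m\<^sub>1, m\<^sub>2)\<close> bounds the sum over all pairs by \<open>\<Sum>\<^sub>d t(d)\<^sup>2/d\<close> times the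
  sum over coprime pairs, and \<open>\<Sum>\<^sub>d t(d)\<^sup>2/d \<le> exp (\<Sum>\<^sub>p t(p)\<^sup>2/p) \<le> e\<^sup>2\<close> because \<open>t(p) \<le> \<lambda>/\<surd>p\<close> and
  \<open>p \<ge> \<lambda>\<^sup>2\<close>.

  For the second bound take the primes \<open>\<lambda>\<^sup>2 < p \<le> W\<close> with \<open>log W = c\<^sup>J log \<lambda>\<^sup>2\<close>. Mertens' theorem, applied
  on the ranges \<open>log p \<in> (c\<^sup>j log \<lambda>\<^sup>2, c\<^sup>j\<^sup>+\<^sup>1 log \<lambda>\<^sup>2]\<close>, gives \<open>Y = \<Sum>\<^sub>p t(p)/\<surd>p \<ge> (1 - o(1)) \<lambda> / (2 log \<lambda>)\<close>
  for \<open>c \<rightarrow> 1\<close>, \<open>J \<rightarrow> \<infinity>\<close>. By Rankin's trick the square-free products of at most \<open>k \<approx> 3 \<lambda> log log \<lambda> / log W\<close>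
  of these primes, all of size \<open>\<le> z\<close>, already contribute \<open>\<ge> exp ((1 - 1/\<lambda>) Y) / 2\<close> to \<open>\<Sum> t(m)/\<surd>m\<close>.
  The first bound, applied at height \<open>min(z, exp (4 \<lambda> log log \<lambda>))\<close>, turns this into
  \<open>exp (2Y) / O(\<lambda> log log \<lambda>) = exp ((1 + o(1)) \<lambda> / log \<lambda>)\<close>.
\<close>

section \<open>The multiplicative function \<open>t\<close>\<close>

text \<open>\<open>sqrt\<close> is odd on the reals, so \<open>lam x < 0\<close> whenever \<open>ln x ln (ln x) < 0\<close>; hence the
  hypothesis \<open>0 \<le> lam x\<close>.\<close>

lemma r_pp_nonneg: "0 \<le> lam x \<Longrightarrow> 0 \<le> r_pp x p k"
  unfolding r_pp_def
  by (cases p) (auto intro!: divide_nonneg_pos mult_pos_pos simp: ln_gt_zero_iff)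

lemma t_pp_nonneg: "0 \<le> lam x \<Longrightarrow> 0 \<le> t_pp x p k"
  unfolding t_pp_def using r_pp_nonneg[of x p k] by simp

lemma t_pp_le_r_pp: "0 \<le> lam x \<Longrightarrow> t_pp x p k \<le> r_pp x p k"
  unfolding t_pp_def using r_pp_nonneg[of x p k]
  by (simp add: divide_le_eq mult_le_cancel_left1 add_pos_nonneg)

lemma r_pp_le: "0 \<le> lam x \<Longrightarrow> r_pp x p 1 \<le> lam x / (sqrt (real p) * ln (real p))"
  unfolding r_pp_def using divide_nonneg_nonneg[of "lam x" "sqrt (real p) * ln (real p)"]
  by (cases "p = 0") (auto simp: ln_ge_zero)

lemma t_pp_sq_div_le:
  assumes l: "0 \<le> lam x" and p: "real p \<ge> 3"
  shows "t_pp x p 1 ^ 2 / real p \<le> lam x ^ 2 / (real p * (real p - 1))"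
proof -
  have lnp: "ln (real p) \<ge> 1"
    using p exp_le by (subst ln_ge_iff) auto
  have sp: "sqrt (real p) > 0" using p by simp
  have "t_pp x p 1 \<le> lam x / (sqrt (real p) * ln (real p))"
    using t_pp_le_r_pp[OF l] r_pp_le[OF l] by (rule order_trans)
  hence "t_pp x p 1 ^ 2 \<le> (lam x / (sqrt (real p) * ln (real p))) ^ 2"
    using t_pp_nonneg[OF l] by (intro power_mono) auto
  also have "\<dots> = lam x ^ 2 / (real p * ln (real p) ^ 2)"
    using p by (simp add: power_divide power_mult_distrib)
  also have "\<dots> \<le> lam x ^ 2 / (real p * 1)"
  proof -
    have "ln (real p) ^ 2 \<ge> 1" using lnp by (simp add: one_le_power)
    hence "real p * 1 \<le> real p * ln (real p) ^ 2" using p by (intro mult_left_mono) auto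
    thus ?thesis using p by (intro divide_left_mono) auto
  qed
  finally have A: "t_pp x p 1 ^ 2 \<le> lam x ^ 2 / real p" by simp
  hence "t_pp x p 1 ^ 2 / real p \<le> lam x ^ 2 / real p / real p"
    using p by (intro divide_right_mono) auto
  also have "\<dots> = lam x ^ 2 / (real p * real p)" by simp
  also have "\<dots> \<le> lam x ^ 2 / (real p * (real p - 1))"
  proof (rule divide_left_mono)
    show "real p * (real p - 1) \<le> real p * real p" using p by (intro mult_left_mono) auto
  qed (use p in auto)
  finally show ?thesis .
qed

lemma t_fun_nonneg: "0 \<le> lam x \<Longrightarrow> 0 \<le> t_fun x m"
  unfolding t_fun_def by (intro prod_nonneg) (simp add: t_pp_nonneg)

lemma prod_prime_factors_mult:
  fixes g :: "nat \<Rightarrow> nat \<Rightarrow> 'a :: comm_monoid_mult"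
  assumes "coprime a b" "a > 0" "b > 0"
  shows "(\<Prod>p\<in>prime_factors (a * b). g p (multiplicity p (a * b))) =
         (\<Prod>p\<in>prime_factors a. g p (multiplicity p a)) * (\<Prod>p\<in>prime_factors b. g p (multiplicity p b))"
proof -
  have disj: "prime_factors a \<inter> prime_factors b = {}"
    using assms(1) by (auto simp: in_prime_factors_iff dest: coprime_common_divisor_nat simp: prime_nat_iff)
  have mult_ab: "multiplicity p (a * b) = multiplicity p a + multiplicity p b"
    if "p \<in> prime_factors a \<union> prime_factors b" for p
    using that assms by (subst prime_elem_multiplicity_mult_distrib) (auto simp: in_prime_factors_iff)
  have vanish_b: "multiplicity p b = 0" if "p \<in> prime_factors a" for p
    using that disj by (auto intro!: not_dvd_imp_multiplicity_0 simp: in_prime_factors_iff assms)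
  have vanish_a: "multiplicity p a = 0" if "p \<in> prime_factors b" for p
    using that disj by (auto intro!: not_dvd_imp_multiplicity_0 simp: in_prime_factors_iff assms)
  have "prime_factors (a * b) = prime_factors a \<union> prime_factors b"
    using assms by (intro prime_factors_product) auto
  hence "(\<Prod>p\<in>prime_factors (a * b). g p (multiplicity p (a * b))) =
      (\<Prod>p\<in>prime_factors a. g p (multiplicity p (a * b))) * (\<Prod>p\<in>prime_factors b. g p (multiplicity p (a * b)))"
    using disj by (simp add: prod.union_disjoint)
  also have "(\<Prod>p\<in>prime_factors a. g p (multiplicity p (a * b))) = (\<Prod>p\<in>prime_factors a. g p (multiplicity p a))"
    using mult_ab vanish_b by (intro prod.cong) auto
  also have "(\<Prod>p\<in>prime_factors b. g p (multiplicity p (a * b))) = (\<Prod>p\<in>prime_factors b. g p (multiplicity p b))"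
    using mult_ab vanish_a by (intro prod.cong) auto
  finally show ?thesis .
qed

lemma t_fun_mult: "coprime a b \<Longrightarrow> a > 0 \<Longrightarrow> b > 0 \<Longrightarrow> t_fun x (a * b) = t_fun x a * t_fun x b"
  unfolding t_fun_def by (rule prod_prime_factors_mult)

lemma t_fun_nonzero_prime_factorD:
  assumes "t_fun x m \<noteq> 0" "p \<in> prime_factors m"
  shows "multiplicity p m = 1" "lam x ^ 2 \<le> real p" "real p \<le> exp ((ln (lam x))^2)"
proof -
  have "r_pp x p (multiplicity p m) \<noteq> 0"
    using assms unfolding t_fun_def t_pp_def by (auto simp: prod_zero_iff)
  thus "multiplicity p m = 1" "lam x ^ 2 \<le> real p" "real p \<le> exp ((ln (lam x))^2)"
    unfolding r_pp_def by (auto split: if_splits)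
qed

lemma t_fun_nonzero_squarefree:
  assumes "t_fun x m \<noteq> 0" "m > 0"
  shows "squarefree m"
  using assms squarefree_factorial_semiring'[of m] by (auto dest: t_fun_nonzero_prime_factorD(1))

lemma squarefree_eq_prod_prime_factors:
  assumes "squarefree (m :: nat)"
  shows "m = \<Prod>(prime_factors m)"
proof -
  have m0: "m \<noteq> 0" using assms by (metis not_squarefree_0)
  have mult1: "multiplicity p m = 1" if "p \<in> prime_factors m" for p
    using assms that squarefree_factorial_semiring'[OF m0] by blast
  have "m = (\<Prod>p\<in>prime_factors m. p ^ multiplicity p m)"
    using m0 by (simp add: prime_factorization_nat)
  also have "\<dots> = \<Prod>(prime_factors m)"
    using mult1 by (intro prod.cong) auto
  finally show ?thesis .
qed

lemma squarefree_coprime_div: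
  assumes "squarefree (m :: nat)" "d dvd m"
  shows "coprime d (m div d)"
proof -
  have "gcd d (m div d) ^ 2 dvd d * (m div d)"
    unfolding power2_eq_square by (intro mult_dvd_mono) auto
  also have "d * (m div d) = m" using assms(2) by (rule dvd_mult_div_cancel)
  finally have "gcd d (m div d) dvd 1" by (rule squarefreeD[OF assms(1)])
  thus ?thesis by (simp add: coprime_iff_gcd_eq_1)
qed

lemma prime_factors_prod_primes:
  assumes "finite A" "\<And>p. p \<in> A \<Longrightarrow> prime p"
  shows "prime_factors (\<Prod>A) = A"
proof -
  have "prime_factors (prod id A) = \<Union> ((prime_factors \<circ> id) ` A)"
    using assms by (intro prime_factors_prod) (auto, metis not_prime_0)
  also have "\<dots> = A" using assms by (auto simp: prime_prime_factors)
  finally show ?thesis by simp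
qed

lemma t_fun_prime: "prime p \<Longrightarrow> t_fun x p = t_pp x p 1"
  unfolding t_fun_def by (simp add: prime_prime_factors)

lemma t_fun_prod_primes:
  assumes "finite A" "\<And>p. p \<in> A \<Longrightarrow> prime p"
  shows "t_fun x (\<Prod>A) = (\<Prod>p\<in>A. t_pp x p 1)"
  using assms
proof (induction A rule: finite_induct)
  case (insert q A)
  have "coprime q (\<Prod>A)"
    using insert by (intro prod_coprime_right) (metis insertCI primes_coprime)
  moreover have "q > 0" "\<Prod>A > 0" using insert by (auto intro: prime_gt_0_nat)
  ultimately show ?case
    using insert by (simp add: t_fun_mult t_fun_prime)
qed (simp add: t_fun_def)

section \<open>Chebyshev and Mertens estimates\<close>

definition chebyshev_psi :: "nat \<Rightarrow> real" where
  "chebyshev_psi n = (\<Sum>d\<in>{1..n}. mangoldt d)"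

lemma ln_fact_eq_sum_mangoldt: "ln (fact n :: real) = (\<Sum>d\<in>{1..n}. mangoldt d * real (n div d))"
proof (induction n)
  case (Suc n)
  have "(\<Sum>d\<in>{1..Suc n}. mangoldt d * real (Suc n div d)) =
        (\<Sum>d\<in>{1..Suc n}. mangoldt d * real (n div d) + (if d dvd Suc n then mangoldt d else 0))"
    by (intro sum.cong refl) (simp add: div_Suc dvd_eq_mod_eq_0 algebra_simps)
  also have "\<dots> = (\<Sum>d\<in>{1..n}. mangoldt d * real (n div d)) +
                   (\<Sum>d\<in>{1..Suc n}. if d dvd Suc n then mangoldt d else 0)"
    by (simp add: sum.distrib sum.cl_ivl_Suc)
  also have "(\<Sum>d\<in>{1..Suc n}. if d dvd Suc n then mangoldt d else 0) = (\<Sum>d | d dvd Suc n. mangoldt d)"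
    using dvd_pos_nat[of "Suc n"]
    by (subst sum.inter_filter[symmetric]) (auto intro!: sum.cong dest: dvd_imp_le simp: Suc_le_eq)
  also have "\<dots> = ln (real (Suc n))" by (subst mangoldt_sum) auto
  finally show ?case using Suc by (simp add: ln_mult fact_Suc)
qed simp

lemma ln_central_binomial_eq_sum_mangoldt:
  "ln (real (2*m choose m)) = (\<Sum>d\<in>{1..2*m}. mangoldt d * (real ((2*m) div d) - 2 * real (m div d)))"
proof -
  have "fact m * fact m * (2*m choose m) = (fact (2*m) :: nat)"
    using binomial_fact_lemma[of m "2*m"] by (simp add: mult_2)
  hence "(fact (2*m)::real) = fact m * fact m * real (2*m choose m)"
    by (metis of_nat_fact of_nat_mult)
  hence "ln (real (2*m choose m)) = ln (fact (2*m)) - 2 * ln (fact m)"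
    by (simp add: ln_mult)
  also have "\<dots> = (\<Sum>d\<in>{1..2*m}. mangoldt d * real ((2*m) div d)) - 2 * (\<Sum>d\<in>{1..2*m}. mangoldt d * real (m div d))"
  proof -
    have "(\<Sum>d\<in>{1..2*m}. mangoldt d * real (m div d)) = (\<Sum>d\<in>{1..m}. mangoldt d * real (m div d))"
      by (rule sum.mono_neutral_right) auto
    thus ?thesis by (simp add: ln_fact_eq_sum_mangoldt)
  qed
  also have "\<dots> = (\<Sum>d\<in>{1..2*m}. mangoldt d * (real ((2*m) div d) - 2 * real (m div d)))"
    by (simp add: sum_subtractf sum_distrib_left algebra_simps)
  finally show ?thesis .
qed

lemma chebyshev_psi_double_le_ln_binomial:
  "chebyshev_psi (2*m) - chebyshev_psi m \<le> ln (real (2*m choose m))"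
proof -
  have "(\<Sum>d\<in>{1..2*m}. if m < d then mangoldt d else 0)
        \<le> (\<Sum>d\<in>{1..2*m}. mangoldt d * (real ((2*m) div d) - 2 * real (m div d)))"
  proof (intro sum_mono)
    fix d assume d: "d \<in> {1..2*m}"
    have "2 * (m div d) \<le> (2*m) div d"
    proof -
      have "d > 0" using d by simp
      moreover have "2 * (m div d) * d \<le> 2 * m" by (simp add: mult.assoc)
      ultimately show ?thesis by (simp add: less_eq_div_iff_mult_less_eq)
    qed
    hence A: "real ((2*m) div d) - 2 * real (m div d) \<ge> 0"
      by (metis diff_ge_0_iff_ge of_nat_le_iff of_nat_mult of_nat_numeral)
    show "(if m < d then mangoldt d else 0) \<le> mangoldt d * (real (2 * m div d) - 2 * real (m div d))"
    proof (cases "m < d")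
      case True
      hence "m div d = 0" by simp
      moreover have "(2*m) div d \<ge> 1" using d True by (subst less_eq_div_iff_mult_less_eq) auto
      ultimately have "real ((2*m) div d) - 2 * real (m div d) \<ge> 1" by simp
      thus ?thesis using True mangoldt_nonneg[of d] by (simp add: mult_le_cancel_left1)
    qed (use A mangoldt_nonneg[of d] in auto)
  qed
  moreover have "(\<Sum>d\<in>{1..2*m}. if m < d then mangoldt d else (0::real)) = chebyshev_psi (2*m) - chebyshev_psi m"
  proof -
    have "{1..2*m} = {1..m} \<union> {m<..2*m}" by auto
    hence "chebyshev_psi (2*m) = chebyshev_psi m + (\<Sum>d\<in>{m<..2*m}. mangoldt d)" unfolding chebyshev_psi_def
      by (metis (no_types) sum.union_disjoint finite_atLeastAtMost finite_greaterThanAtMost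
          ivl_disj_int_two(8) Int_commute inf_sup_aci(1) disjoint_iff greaterThanAtMost_iff atLeastAtMost_iff not_less)
    moreover have "(\<Sum>d\<in>{1..2*m}. if m < d then mangoldt d else (0::real)) = (\<Sum>d\<in>{m<..2*m}. mangoldt d)"
      by (subst sum.inter_filter[symmetric]) (auto intro!: sum.cong)
    ultimately show ?thesis by simp
  qed
  ultimately show ?thesis unfolding ln_central_binomial_eq_sum_mangoldt by simp
qed

lemma chebyshev_psi_double_le: "chebyshev_psi (2*m) - chebyshev_psi m \<le> 2 * real m * ln 2"
proof -
  have "real (2*m choose m) \<le> 2^(2*m)"
    using binomial_le_pow2[of "2*m" m] by (metis of_nat_le_iff of_nat_numeral of_nat_power)
  hence "ln (real (2*m choose m)) \<le> ln (2 ^ (2*m))" by (subst ln_le_cancel_iff) auto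
  also have "\<dots> = 2 * real m * ln 2" by (simp add: ln_realpow)
  finally show ?thesis using chebyshev_psi_double_le_ln_binomial[of m] by linarith
qed

lemma chebyshev_psi_le: "chebyshev_psi n \<le> 4 * real n"
proof (induction n rule: less_induct)
  case (less n)
  have ln2: "2 * real m * ln 2 \<le> 2 * real m" for m
    using ln_le_minus_one[of 2] by (simp add: mult_left_le)
  obtain m where m: "n = 2 * m \<or> n = 2 * m + 1" by (metis oddE evenE)
  show ?case
  proof (cases "n = 2 * m")
    case n: True
    show ?thesis
    proof (cases "m = 0")
      case False
      hence "chebyshev_psi m \<le> 4 * real m" using n by (intro less) simp
      thus ?thesis using n chebyshev_psi_double_le[of m] ln2[of m] by simp
    qed (use n in \<open>simp add: chebyshev_psi_def\<close>)
  next
    case False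
    hence n: "n = 2 * m + 1" using m by simp
    have "chebyshev_psi n = chebyshev_psi (2 * m) + mangoldt (2 * m + 1)"
      unfolding n chebyshev_psi_def by simp
    moreover have "mangoldt (2 * m + 1) \<le> real (2 * m)"
      using mangoldt_le[of "2 * m + 1"] ln_le_minus_one[of "real (2 * m + 1)"] by simp
    ultimately show ?thesis
      using less[of m] chebyshev_psi_double_le[of m] ln2[of m] n by simp
  qed
qed

lemma fact_le_power_self: "(fact n :: real) \<le> real n ^ n"
proof (induction n)
  case (Suc n)
  have "(fact (Suc n) :: real) \<le> real (Suc n) * real n ^ n"
    using Suc by (simp add: mult_left_mono)
  also have "\<dots> \<le> real (Suc n) * real (Suc n) ^ n" by (intro mult_left_mono power_mono) auto
  finally show ?case by simp
qed simp

lemma power_self_le_exp_mult_fact: "real n ^ n \<le> exp (real n) * fact n"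
proof (induction n)
  case (Suc n)
  have "real (Suc n) ^ n \<le> (real n * exp (1 / real n)) ^ n" if "n > 0"
  proof (intro power_mono)
    show "real (Suc n) \<le> real n * exp (1 / real n)"
      using exp_ge_add_one_self[of "1 / real n"] that by (simp add: field_simps)
  qed auto
  also have "(real n * exp (1 / real n)) ^ n = real n ^ n * exp 1" if "n > 0"
    using that by (simp add: power_mult_distrib exp_of_nat_mult[symmetric])
  finally have "real (Suc n) ^ n \<le> exp (real n) * fact n * exp 1"
    using Suc by (cases "n = 0") (auto simp: exp_ge_add_one_self[of 1, simplified] intro: order_trans mult_right_mono)
  hence "real (Suc n) * real (Suc n) ^ n \<le> real (Suc n) * (exp (real n) * fact n * exp 1)"
    by (intro mult_left_mono) auto
  thus ?case by (simp add: exp_add algebra_simps)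
qed simp

lemma ln_fact_ge: "real n * ln (real n) - real n \<le> ln (fact n)"
proof (cases "n = 0")
  case False
  have "ln (real n ^ n) \<le> ln (exp (real n) * fact n)"
    using power_self_le_exp_mult_fact[of n] False by (subst ln_le_cancel_iff) auto
  thus ?thesis using False by (simp add: ln_mult ln_realpow)
qed simp

lemma ln_fact_le: "ln (fact n) \<le> real n * ln (real n)"
proof (cases "n = 0")
  case False
  have "ln (fact n) \<le> ln (real n ^ n)"
    using fact_le_power_self[of n] False by (subst ln_le_cancel_iff) auto
  thus ?thesis using False by (simp add: ln_realpow)
qed simp

lemma real_div_ge_minus_one: "real n / real d - 1 \<le> real (n div d)"
proof -
  have "real_of_int \<lfloor>real n / real d\<rfloor> = real (n div d)"
    using floor_divide_of_nat_eq[of n d] by (metis of_int_of_nat_eq)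
  thus ?thesis using real_of_int_floor_gt_diff_one[of "real n / real d"] by linarith
qed

definition mertens_mangoldt :: "nat \<Rightarrow> real" where
  "mertens_mangoldt n = (\<Sum>d\<in>{1..n}. mangoldt d / real d)"

lemma mertens_mangoldt_ge:
  assumes "n \<ge> 1"
  shows "ln (real n) - 1 \<le> mertens_mangoldt n"
proof -
  have "ln (fact n) \<le> (\<Sum>d\<in>{1..n}. mangoldt d * (real n / real d))"
    unfolding ln_fact_eq_sum_mangoldt by (intro sum_mono mult_left_mono of_nat_div_le_of_nat mangoldt_nonneg)
  also have "\<dots> = real n * mertens_mangoldt n"
    unfolding mertens_mangoldt_def sum_distrib_left by (intro sum.cong) (auto simp: mult.commute)
  finally have "real n * (ln (real n) - 1) \<le> real n * mertens_mangoldt n"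
    using ln_fact_ge[of n] by (simp add: algebra_simps)
  thus ?thesis using assms by (simp add: mult_le_cancel_left_pos)
qed

lemma mertens_mangoldt_le:
  assumes "n \<ge> 1"
  shows "mertens_mangoldt n \<le> ln (real n) + 4"
proof -
  have "real n * mertens_mangoldt n - chebyshev_psi n = (\<Sum>d\<in>{1..n}. mangoldt d * (real n / real d - 1))"
    unfolding mertens_mangoldt_def chebyshev_psi_def
    by (simp add: sum_distrib_left sum_subtractf right_diff_distrib mult.commute)
  also have "\<dots> \<le> (\<Sum>d\<in>{1..n}. mangoldt d * real (n div d))"
    by (intro sum_mono mult_left_mono real_div_ge_minus_one mangoldt_nonneg)
  also have "\<dots> \<le> real n * ln (real n)"
    using ln_fact_le[of n] by (simp add: ln_fact_eq_sum_mangoldt)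
  finally have "real n * mertens_mangoldt n \<le> real n * (ln (real n) + 4)"
    using chebyshev_psi_le[of n] by (simp add: algebra_simps)
  thus ?thesis using assms by (simp add: mult_le_cancel_left_pos)
qed

definition primes_between :: "real \<Rightarrow> real \<Rightarrow> nat set" where
  "primes_between u v = {p. prime p \<and> u < real p \<and> real p \<le> v}"

lemma finite_primes_between [simp]: "finite (primes_between u v)"
  unfolding primes_between_def by (rule finite_subset[of _ "{..nat \<lfloor>v\<rfloor>}"]) (auto simp: le_nat_floor)

lemma primes_between_empty [simp]: "v \<le> u \<Longrightarrow> primes_between u v = {}"
  unfolding primes_between_def by auto

lemma primes_between_ge_2: "p \<in> primes_between u v \<Longrightarrow> real p \<ge> 2"
  unfolding primes_between_def using prime_ge_2_nat by force

lemma sum_primes_between_split: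
  assumes "u \<le> v" "v \<le> w"
  shows "(\<Sum>p\<in>primes_between u w. f p) = (\<Sum>p\<in>primes_between u v. f p) + (\<Sum>p\<in>primes_between v w. f p)"
proof -
  have "primes_between u w = primes_between u v \<union> primes_between v w"
       "primes_between u v \<inter> primes_between v w = {}"
    using assms unfolding primes_between_def by auto
  thus ?thesis by (simp add: sum.union_disjoint)
qed

lemma primes_between_floor: "v \<ge> 0 \<Longrightarrow> primes_between u (real (nat \<lfloor>v\<rfloor>)) = primes_between u v"
  unfolding primes_between_def by (metis le_nat_floor of_nat_floor order_trans of_nat_le_iff)

lemma mertens_le_mangoldt: "(\<Sum>p\<in>primes_between 0 (real n). ln (real p) / real p) \<le> mertens_mangoldt n"
proof -
  have "(\<Sum>p\<in>primes_between 0 (real n). ln (real p) / real p) = (\<Sum>p\<in>primes_between 0 (real n). mangoldt p / real p)"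
    unfolding primes_between_def by (intro sum.cong) auto
  also have "\<dots> \<le> mertens_mangoldt n" unfolding mertens_mangoldt_def primes_between_def
    by (intro sum_mono2) (auto simp: mangoldt_nonneg dest: prime_gt_0_nat)
  finally show ?thesis .
qed

lemma sum_ln_over_j_pred_j_le: "n \<ge> 1 \<Longrightarrow> (\<Sum>j\<in>{2..n}. ln (real j) / (real j * (real j - 1))) \<le> 2 - (ln (real n) + 2) / real n"
proof (induction n rule: dec_induct)
  case base thus ?case by simp
next
  case (step n)
  have n: "real n \<ge> 1" using step by simp
  have l: "ln (real n + 1) - ln (real n) \<le> 1 / real n"
  proof -
    have "ln (real n + 1) - ln (real n) = ln ((real n + 1) / real n)" using n by (simp add: ln_div)
    also have "\<dots> \<le> (real n + 1) / real n - 1" using n by (intro ln_le_minus_one) auto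
    also have "\<dots> = 1 / real n" using n by (simp add: field_simps)
    finally show ?thesis .
  qed
  have key: "(real n + 1) * (ln (real n + 1) - ln (real n)) \<le> 2"
  proof -
    have "(real n + 1) * (ln (real n + 1) - ln (real n)) \<le> (real n + 1) * (1 / real n)"
      using l n by (intro mult_left_mono) auto
    also have "\<dots> \<le> 2" using n by (simp add: field_simps)
    finally show ?thesis .
  qed
  have "(\<Sum>j\<in>{2..Suc n}. ln (real j) / (real j * (real j - 1))) =
        (\<Sum>j\<in>{2..n}. ln (real j) / (real j * (real j - 1))) + ln (real n + 1) / ((real n + 1) * real n)"
    using step by (subst sum.cl_ivl_Suc) (auto simp: add_ac)
  also have "\<dots> \<le> 2 - (ln (real n) + 2) / real n + ln (real n + 1) / ((real n + 1) * real n)"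
    using step by simp
  also have "\<dots> \<le> 2 - (ln (real (Suc n)) + 2) / real (Suc n)"
  proof -
    define A where "A = ln (real n + 1)"
    define B where "B = ln (real n)"
    define N where "N = real n"
    have N: "N \<ge> 1" using n N_def by simp
    have "A + N*(A+2) \<le> (B+2)*(N+1)" using key unfolding A_def B_def N_def by (simp add: algebra_simps)
    hence "(A + N*(A+2))/(N*(N+1)) \<le> (B+2)*(N+1)/(N*(N+1))" using N by (intro divide_right_mono) auto
    moreover have "(A + N*(A+2))/(N*(N+1)) = A / ((N + 1) * N) + (A + 2) / (N + 1)"
      using N by (simp add: divide_simps)
    moreover have "(B+2)*(N+1)/(N*(N+1)) = (B+2)/N" using N by (simp add: divide_simps)
    ultimately have "ln (real n + 1) / ((real n + 1) * real n) + (ln (real n + 1) + 2) / (real n + 1) \<le> (ln (real n) + 2) / real n"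
      unfolding A_def B_def N_def by simp
    thus ?thesis by (simp add: add_ac)
  qed
  finally show ?case .
qed

lemma sum_geometric_from_2_le:
  fixes q :: real
  assumes "0 \<le> q" "q < 1"
  shows "(\<Sum>k\<in>{2..n}. q ^ k) \<le> q ^ 2 / (1 - q)"
proof (cases "n < 2")
  case False
  have "(\<Sum>k\<in>{2..n}. q ^ k) = (q ^ 2 - q ^ Suc n) / (1 - q)"
    using False assms by (subst sum_gp) auto
  also have "\<dots> \<le> q ^ 2 / (1 - q)" using assms by (intro divide_right_mono) auto
  finally show ?thesis .
qed (use assms in simp)

lemma mangoldt_nonzero_not_primeE:
  assumes "(mangoldt d :: real) \<noteq> 0" "\<not> prime d"
  obtains p k where "prime p" "2 \<le> k" "k \<le> d" "p \<le> d" "d = p ^ k"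
proof -
  have "primepow d" using assms(1) unfolding mangoldt_def by (auto split: if_splits)
  then obtain p k where pk: "prime p" "k > 0" "d = p ^ k" unfolding primepow_def by blast
  have "k \<ge> 2" using pk assms(2) by (cases "k = 1") auto
  moreover have "p ^ 1 \<le> p ^ k" using pk by (intro power_increasing) (auto dest: prime_gt_0_nat)
  moreover have "k < p ^ k"
    using less_exp[of k] power_mono[of 2 p k] prime_ge_2_nat[OF pk(1)] by linarith
  ultimately show ?thesis using that pk by simp
qed

lemma sum_mangoldt_prime_powers_le:
  "(\<Sum>d\<in>{1..n} - {p. prime p}. mangoldt d / real d) \<le> (\<Sum>p\<in>primes_between 0 (real n). ln (real p) / (real p * (real p - 1)))"
proof -
  define P where "P = primes_between 0 (real n)"
  define g where "g = (\<lambda>d. mangoldt d / real d :: real)"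
  define Q where "Q = P \<times> {2..n}"
  define f where "f = (\<lambda>(p, k). p ^ k :: nat)"
  have finQ: "finite Q" unfolding Q_def P_def by auto
  have inj: "inj_on f Q"
    unfolding inj_on_def Q_def P_def primes_between_def f_def by (auto simp: prime_power_inj'')
  have vanish: "g d = 0" if "d \<in> {1..n} - {p. prime p} - f ` Q" for d
  proof (rule ccontr)
    assume "g d \<noteq> 0"
    hence "(mangoldt d :: real) \<noteq> 0" "\<not> prime d" using that unfolding g_def by auto
    then obtain p k where "prime p" "2 \<le> k" "k \<le> d" "p \<le> d" "d = p ^ k"
      by (rule mangoldt_nonzero_not_primeE)
    hence "(p, k) \<in> Q" "d = f (p, k)"
      using that unfolding Q_def P_def primes_between_def f_def by (auto dest: prime_gt_0_nat)
    thus False using that by blast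
  qed
  have "(\<Sum>d\<in>{1..n} - {p. prime p}. g d) \<le> (\<Sum>d\<in>f ` Q. g d)"
  proof -
    have "(\<Sum>d\<in>{1..n} - {p. prime p}. g d) = (\<Sum>d\<in>({1..n} - {p. prime p}) \<inter> f ` Q. g d)"
    proof (rule sum.mono_neutral_right)
      show "\<forall>d\<in>{1..n} - {p. prime p} - ({1..n} - {p. prime p}) \<inter> f ` Q. g d = 0"
        using vanish by blast
    qed auto
    also have "\<dots> \<le> (\<Sum>d\<in>f ` Q. g d)"
      using finQ by (intro sum_mono2) (auto simp: g_def mangoldt_nonneg)
    finally show ?thesis .
  qed
  also have "\<dots> = (\<Sum>(p, k)\<in>P \<times> {2..n}. ln (real p) * (1 / real p) ^ k)"
    using inj unfolding Q_def
    by (auto simp: sum.reindex f_def g_def P_def primes_between_def power_one_over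
        intro!: sum.cong)
  also have "\<dots> = (\<Sum>p\<in>P. ln (real p) * (\<Sum>k\<in>{2..n}. (1 / real p) ^ k))"
    by (simp add: sum.cartesian_product[symmetric] sum_distrib_left)
  also have "\<dots> \<le> (\<Sum>p\<in>P. ln (real p) * ((1 / real p) ^ 2 / (1 - 1 / real p)))"
  proof (intro sum_mono mult_left_mono sum_geometric_from_2_le)
    fix p assume "p \<in> P"
    hence "real p \<ge> 2" unfolding P_def by (rule primes_between_ge_2)
    thus "0 \<le> ln (real p)" "0 \<le> 1 / real p" "1 / real p < 1" by auto
  qed
  also have "\<dots> = (\<Sum>p\<in>P. ln (real p) / (real p * (real p - 1)))"
    using primes_between_ge_2 unfolding P_def
    by (intro sum.cong) (auto simp: field_simps power2_eq_square)
  finally show ?thesis unfolding g_def P_def .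
qed

lemma mertens_mangoldt_le_mertens:
  "mertens_mangoldt n \<le> (\<Sum>p\<in>primes_between 0 (real n). ln (real p) / real p) + 2"
proof -
  have primes: "primes_between 0 (real n) = {1..n} \<inter> {p. prime p}"
    unfolding primes_between_def by (auto dest: prime_gt_0_nat)
  have "mertens_mangoldt n = (\<Sum>p\<in>primes_between 0 (real n). mangoldt p / real p) +
        (\<Sum>d\<in>{1..n} - {p. prime p}. mangoldt d / real d)"
    unfolding mertens_mangoldt_def primes by (subst sum.Int_Diff[of _ _ "{p. prime p}"]) auto
  also have "(\<Sum>p\<in>primes_between 0 (real n). mangoldt p / real p) =
             (\<Sum>p\<in>primes_between 0 (real n). ln (real p) / real p)"
    unfolding primes_between_def by (intro sum.cong) auto
  also have "(\<Sum>d\<in>{1..n} - {p. prime p}. mangoldt d / real d) \<le> 2"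
  proof -
    have "(\<Sum>p\<in>primes_between 0 (real n). ln (real p) / (real p * (real p - 1)))
          \<le> (\<Sum>j\<in>{2..n}. ln (real j) / (real j * (real j - 1)))"
      unfolding primes_between_def by (intro sum_mono2) (auto dest: prime_ge_2_nat)
    also have "\<dots> \<le> 2"
    proof (cases "n = 0")
      case False
      hence "0 \<le> (ln (real n) + 2) / real n" by simp
      thus ?thesis using sum_ln_over_j_pred_j_le[of n] False by linarith
    qed simp
    finally show ?thesis using sum_mangoldt_prime_powers_le[of n] by linarith
  qed
  finally show ?thesis by simp
qed

lemma ln_nat_floor_bounds:
  assumes "1 \<le> v"
  shows "ln v - 1 \<le> ln (real (nat \<lfloor>v\<rfloor>))" "ln (real (nat \<lfloor>v\<rfloor>)) \<le> ln v" "1 \<le> nat \<lfloor>v\<rfloor>"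
proof -
  have floor: "real (nat \<lfloor>v\<rfloor>) > v - 1" "real (nat \<lfloor>v\<rfloor>) \<le> v"
    using real_of_int_floor_gt_diff_one[of v] assms by (auto simp: of_nat_floor)
  show "1 \<le> nat \<lfloor>v\<rfloor>" using assms by (simp add: le_nat_floor)
  hence pos: "real (nat \<lfloor>v\<rfloor>) \<ge> 1" by linarith
  show "ln (real (nat \<lfloor>v\<rfloor>)) \<le> ln v" using floor pos by (subst ln_le_cancel_iff) auto
  have "v / 2 \<le> real (nat \<lfloor>v\<rfloor>)" using floor pos by linarith
  hence "ln (v / 2) \<le> ln (real (nat \<lfloor>v\<rfloor>))" using assms by (subst ln_le_cancel_iff) auto
  moreover have "ln (v / 2) = ln v - ln 2" using assms by (simp add: ln_div)
  ultimately show "ln v - 1 \<le> ln (real (nat \<lfloor>v\<rfloor>))" using ln_le_minus_one[of 2] by linarith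
qed

lemma mertens_ge:
  assumes "1 \<le> v"
  shows "ln v - 4 \<le> (\<Sum>p\<in>primes_between 0 v. ln (real p) / real p)"
proof -
  note floor = ln_nat_floor_bounds[OF assms]
  have "primes_between 0 v = primes_between 0 (real (nat \<lfloor>v\<rfloor>))"
    using primes_between_floor[of v 0] assms by simp
  thus ?thesis
    unfolding \<open>primes_between 0 v = _\<close> using mertens_mangoldt_le_mertens[of "nat \<lfloor>v\<rfloor>"] mertens_mangoldt_ge[OF floor(3)] floor(1) by linarith
qed

lemma mertens_le:
  assumes "1 \<le> v"
  shows "(\<Sum>p\<in>primes_between 0 v. ln (real p) / real p) \<le> ln v + 4"
proof -
  note floor = ln_nat_floor_bounds[OF assms]
  have "primes_between 0 v = primes_between 0 (real (nat \<lfloor>v\<rfloor>))"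
    using primes_between_floor[of v 0] assms by simp
  thus ?thesis
    unfolding \<open>primes_between 0 v = _\<close> using mertens_le_mangoldt[of "nat \<lfloor>v\<rfloor>"] mertens_mangoldt_le[OF floor(3)] floor(2) by linarith
qed

lemma mertens_between:
  assumes "1 \<le> u" "u \<le> v"
  shows "ln v - ln u - 8 \<le> (\<Sum>p\<in>primes_between u v. ln (real p) / real p)"
        "(\<Sum>p\<in>primes_between u v. ln (real p) / real p) \<le> ln v - ln u + 8"
  using sum_primes_between_split[of 0 u v "\<lambda>p. ln (real p) / real p"] assms
    mertens_ge[of u] mertens_ge[of v] mertens_le[of u] mertens_le[of v] by auto

lemma sum_recip_p_ln_p_ge:
  assumes "1 \<le> u" "u \<le> v"
  shows "(ln v - ln u - 8) / (ln v) ^ 2 \<le> (\<Sum>p\<in>primes_between u v. 1 / (real p * ln (real p)))"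
proof (cases "v = 1")
  case True
  thus ?thesis using assms by simp
next
  case False
  hence lv: "ln v > 0" using assms by simp
  have "(ln v - ln u - 8) / (ln v) ^ 2 \<le> (\<Sum>p\<in>primes_between u v. ln (real p) / real p) / (ln v) ^ 2"
    using mertens_between(1)[OF assms] by (intro divide_right_mono) auto
  also have "\<dots> = (\<Sum>p\<in>primes_between u v. ln (real p) / real p / (ln v) ^ 2)"
    by (simp add: sum_divide_distrib)
  also have "\<dots> \<le> (\<Sum>p\<in>primes_between u v. 1 / (real p * ln (real p)))"
  proof (intro sum_mono)
    fix p assume p: "p \<in> primes_between u v"
    have p2: "real p \<ge> 2" by (rule primes_between_ge_2[OF p])
    have lp: "ln (real p) > 0" using p2 by simp
    have "ln (real p) \<le> ln v" using p p2 unfolding primes_between_def by (subst ln_le_cancel_iff) auto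
    hence "(ln (real p))^2 \<le> (ln v)^2" using lp by (intro power_mono) auto
    hence "ln (real p) / real p / (ln v)^2 \<le> ln (real p) / real p / (ln (real p))^2"
      using lp p2 lv by (intro divide_left_mono) auto
    also have "\<dots> = 1 / (real p * ln (real p))" using lp p2 by (simp add: power2_eq_square field_simps)
    finally show "ln (real p) / real p / (ln v)^2 \<le> 1 / (real p * ln (real p))" .
  qed
  finally show ?thesis .
qed

lemma sum_recip_p_ln_p_le:
  assumes "1 < u" "u \<le> v"
  shows "(\<Sum>p\<in>primes_between u v. 1 / (real p * ln (real p))) \<le> (ln v - ln u + 8) / (ln u) ^ 2"
proof -
  have lu: "ln u > 0" using assms by simp
  have "(\<Sum>p\<in>primes_between u v. 1 / (real p * ln (real p))) \<le>
        (\<Sum>p\<in>primes_between u v. ln (real p) / real p / (ln u) ^ 2)"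
  proof (intro sum_mono)
    fix p assume p: "p \<in> primes_between u v"
    have p2: "real p \<ge> 2" by (rule primes_between_ge_2[OF p])
    have lp: "ln (real p) > 0" using p2 by simp
    have "ln u \<le> ln (real p)" using p assms unfolding primes_between_def by (subst ln_le_cancel_iff) auto
    hence sq: "(ln u)^2 \<le> (ln (real p))^2" using lu by (intro power_mono) auto
    have "1 / (real p * ln (real p)) = ln (real p) / real p / (ln (real p))^2"
      using lp p2 by (simp add: power2_eq_square field_simps)
    also have "\<dots> \<le> ln (real p) / real p / (ln u)^2"
      using lp p2 lu sq by (intro divide_left_mono) auto
    finally show "1 / (real p * ln (real p)) \<le> ln (real p) / real p / (ln u)^2" .
  qed
  also have "\<dots> = (\<Sum>p\<in>primes_between u v. ln (real p) / real p) / (ln u) ^ 2"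
    by (simp add: sum_divide_distrib)
  also have "\<dots> \<le> (ln v - ln u + 8) / (ln u) ^ 2"
    using mertens_between(2)[of u v] assms lu by (intro divide_right_mono) auto
  finally show ?thesis .
qed

text \<open>Mertens' error term is only \<open>O(1)\<close>, so the lower bound for \<open>\<Sum> 1 / (p ln p)\<close> is applied
  separately on each of the geometrically growing ranges \<open>ln p \<in> (L c\<^sup>j, L c\<^sup>j\<^sup>+\<^sup>1]\<close>.\<close>

lemma sum_recip_p_ln_p_geometric_sum_ge:
  assumes L: "L > 0" and c: "c > 1"
  shows "(\<Sum>j<J. (c - 1) / (L * c ^ (j + 2)) - 8 / L ^ 2)
         \<le> (\<Sum>p\<in>primes_between (exp L) (exp (L * c ^ J)). 1 / (real p * ln (real p)))"
proof (induction J)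
  case (Suc J)
  have cJ: "c ^ J \<ge> 1" "c ^ Suc J \<ge> 1" using c by (simp_all only: one_le_power less_imp_le)
  have m1: "exp L \<le> exp (L * c ^ J)" using L cJ by simp
  have m2: "exp (L * c ^ J) \<le> exp (L * c ^ Suc J)" using L cJ c by (simp add: mult_le_cancel_left)
  have "(c - 1) / (L * c ^ (J + 2)) - 8 / L ^ 2 \<le> (L * c ^ Suc J - L * c ^ J - 8) / (L * c ^ Suc J) ^ 2"
  proof -
    have "(L * c ^ Suc J - L * c ^ J - 8) / (L * c ^ Suc J) ^ 2 =
          (c - 1) / (L * c ^ (J + 2)) - 8 / (L * c ^ Suc J) ^ 2"
      using L c by (simp add: field_simps power2_eq_square)
    moreover have "8 / (L * c ^ Suc J) ^ 2 \<le> 8 / L ^ 2"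
      using L c cJ by (intro divide_left_mono power_mono) (auto simp: mult_le_cancel_left1)
    ultimately show ?thesis by linarith
  qed
  also have "\<dots> \<le> (\<Sum>p\<in>primes_between (exp (L * c ^ J)) (exp (L * c ^ Suc J)). 1 / (real p * ln (real p)))"
    using sum_recip_p_ln_p_ge[OF _ m2] L cJ by simp
  finally show ?case
    using Suc sum_primes_between_split[OF m1 m2, of "\<lambda>p. 1 / (real p * ln (real p))"] by simp
qed simp

lemma sum_recip_p_ln_p_geometric_ge:
  assumes L: "L > 0" and c: "c > 1"
  shows "(1 - (1 / c) ^ J) / (c * L) - 8 * real J / L ^ 2
         \<le> (\<Sum>p\<in>primes_between (exp L) (exp (L * c ^ J)). 1 / (real p * ln (real p)))"
proof -
  have "(c - 1) / (L * c ^ (j + 2)) = (c - 1) / (L * c ^ 2) * (1 / c) ^ j" for j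
    by (simp add: power_add power_one_over mult_ac power2_eq_square)
  hence "(\<Sum>j<J. (c - 1) / (L * c ^ (j + 2)) - 8 / L ^ 2)
        = (c - 1) / (L * c ^ 2) * (\<Sum>j<J. (1 / c) ^ j) - 8 * real J / L ^ 2"
    by (simp add: sum_subtractf sum_distrib_left)
  also have "(\<Sum>j<J. (1 / c) ^ j) = (1 - (1 / c) ^ J) / (1 - 1 / c)"
    using c by (subst sum_gp_strict) auto
  also have "(c - 1) / (L * c ^ 2) * ((1 - (1 / c) ^ J) / (1 - 1 / c)) = (1 - (1 / c) ^ J) / (c * L)"
    using L c by (simp add: field_simps power2_eq_square)
  finally show ?thesis using sum_recip_p_ln_p_geometric_sum_ge[OF L c, of J] by simp
qed

section \<open>Coprime pairs versus the square of \<open>\<Sum> t(m)/\<surd>m\<close>\<close>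

definition nats_le :: "real \<Rightarrow> nat set" where
  "nats_le z = {m. 1 \<le> m \<and> real m \<le> z}"

definition coprime_pairs :: "real \<Rightarrow> (nat \<times> nat) set" where
  "coprime_pairs z = {(m1, m2). 1 \<le> m1 \<and> real m1 \<le> z \<and> 1 \<le> m2 \<and> real m2 \<le> z \<and> coprime m1 m2}"

definition pair_weight :: "(nat \<Rightarrow> real) \<Rightarrow> nat \<times> nat \<Rightarrow> real" where
  "pair_weight f = (\<lambda>(m1, m2). f m1 * f m2 * real m1 * real m2 / real (max m1 m2) ^ 3)"

lemma finite_nats_le [simp]: "finite (nats_le z)"
  by (rule finite_subset[of _ "{..nat \<lfloor>z\<rfloor>}"]) (auto simp: nats_le_def le_nat_floor)

lemma coprime_pairs_subset: "coprime_pairs z \<subseteq> nats_le z \<times> nats_le z"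
  by (auto simp: coprime_pairs_def nats_le_def)

lemma finite_coprime_pairs [simp]: "finite (coprime_pairs z)"
  by (rule finite_subset[OF coprime_pairs_subset]) simp

lemma pair_weight_nonneg: "(\<And>m. 0 \<le> f m) \<Longrightarrow> 0 \<le> pair_weight f q"
  unfolding pair_weight_def by (cases q) (auto intro!: divide_nonneg_nonneg mult_nonneg_nonneg)

lemma sum_pair_weight_coprime_pairs_mono:
  "(\<And>m. 0 \<le> f m) \<Longrightarrow> z1 \<le> z \<Longrightarrow> sum (pair_weight f) (coprime_pairs z1) \<le> sum (pair_weight f) (coprime_pairs z)"
  by (rule sum_mono2[OF finite_coprime_pairs]) (auto simp: coprime_pairs_def pair_weight_nonneg)

definition dyadic_block :: "nat \<Rightarrow> nat" where
  "dyadic_block m = nat \<lfloor>log 2 (real m)\<rfloor>"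

lemma dyadic_block_bounds:
  assumes "m \<ge> 1"
  shows "2 ^ dyadic_block m \<le> m" "m < 2 ^ (dyadic_block m + 1)"
proof -
  have "\<lfloor>log (real 2) (real m)\<rfloor> = int (dyadic_block m)"
    using assms unfolding dyadic_block_def by simp
  thus "2 ^ dyadic_block m \<le> m" "m < 2 ^ (dyadic_block m + 1)"
    using floor_log_nat_eq_powr_iff[of 2 m "dyadic_block m"] assms by auto
qed

lemma dyadic_block_max_le:
  assumes "m1 \<ge> 1" "m2 \<ge> 1" "dyadic_block m1 = dyadic_block m2"
  shows "max m1 m2 \<le> 2 * min m1 m2"
  using dyadic_block_bounds[OF assms(1)] dyadic_block_bounds[OF assms(2)] assms(3) by auto

lemma card_dyadic_blocks_le:
  assumes "z \<ge> 2"
  shows "real (card (dyadic_block ` nats_le z)) \<le> 2 * ln z / ln 2"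
proof -
  have lz: "log 2 z \<ge> 1" using assms by simp
  have "dyadic_block ` nats_le z \<subseteq> {0..nat \<lfloor>log 2 z\<rfloor>}"
    by (auto simp: nats_le_def dyadic_block_def intro!: nat_mono floor_mono)
  hence "card (dyadic_block ` nats_le z) \<le> card {0..nat \<lfloor>log 2 z\<rfloor>}" by (intro card_mono) auto
  hence "real (card (dyadic_block ` nats_le z)) \<le> real (nat \<lfloor>log 2 z\<rfloor>) + 1" by simp
  also have "\<dots> \<le> 2 * log 2 z" using lz of_int_floor_le[of "log 2 z"] by linarith
  also have "\<dots> = 2 * ln z / ln 2" by (simp add: log_def)
  finally show ?thesis .
qed

lemma pair_weight_dyadic_block_ge:
  assumes f: "\<And>m. 0 \<le> f m" and m: "m1 \<ge> 1" "m2 \<ge> 1" "dyadic_block m1 = dyadic_block m2"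
  shows "f m1 / sqrt (real m1) * (f m2 / sqrt (real m2)) \<le> 4 * pair_weight f (m1, m2)"
proof -
  define M where "M = real (max m1 m2)"
  define \<mu> where "\<mu> = real (min m1 m2)"
  have prod: "real m1 * real m2 = M * \<mu>" unfolding M_def \<mu>_def by (simp add: max_def min_def)
  have M1: "M \<ge> 1" unfolding M_def using m by simp
  have hm: "\<mu> \<ge> M / 2" using dyadic_block_max_le[OF m] unfolding M_def \<mu>_def by linarith
  have "(M / 2) ^ 2 \<le> real m1 * real m2"
    using hm M1 unfolding prod power2_eq_square by (intro mult_mono) auto
  hence "sqrt ((M / 2) ^ 2) \<le> sqrt (real m1) * sqrt (real m2)"
    by (simp only: real_sqrt_mult[symmetric] real_sqrt_le_mono)
  hence "M / 2 \<le> sqrt (real m1) * sqrt (real m2)" using M1 by simp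
  hence "1 / (sqrt (real m1) * sqrt (real m2)) \<le> 2 / M"
    using M1 by (simp add: divide_simps)
  also have "\<dots> \<le> 4 * (M * \<mu>) / M ^ 3"
    using hm M1 by (simp add: divide_simps power3_eq_cube)
  finally have "1 / (sqrt (real m1) * sqrt (real m2)) \<le> 4 * (real m1 * real m2) / M ^ 3"
    unfolding prod .
  hence "f m1 * f m2 * (1 / (sqrt (real m1) * sqrt (real m2))) \<le> f m1 * f m2 * (4 * (real m1 * real m2) / M ^ 3)"
    using f by (intro mult_left_mono) auto
  thus ?thesis unfolding pair_weight_def M_def by (simp add: mult_ac)
qed

lemma sum_div_sqrt_squared_le_pair_weight:
  assumes f: "\<And>m. 0 \<le> f m" and z: "z \<ge> 2"
  shows "(\<Sum>m\<in>nats_le z. f m / sqrt (real m)) ^ 2 \<le> 8 * ln z / ln 2 * sum (pair_weight f) (nats_le z \<times> nats_le z)"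
proof -
  define a where "a = (\<lambda>m. f m / sqrt (real m))"
  define K where "K = dyadic_block ` nats_le z"
  define B where "B = (\<lambda>k. {m \<in> nats_le z. dyadic_block m = k})"
  have W0: "0 \<le> pair_weight f q" for q by (rule pair_weight_nonneg[OF f])
  have block_sq: "(sum a (B k)) ^ 2 \<le> (\<Sum>m1\<in>B k. \<Sum>m2\<in>nats_le z. 4 * pair_weight f (m1, m2))" for k
  proof -
    have "(sum a (B k)) ^ 2 = (\<Sum>m1\<in>B k. \<Sum>m2\<in>B k. a m1 * a m2)"
      unfolding power2_eq_square by (rule sum_product)
    also have "\<dots> \<le> (\<Sum>m1\<in>B k. \<Sum>m2\<in>B k. 4 * pair_weight f (m1, m2))"
      unfolding a_def by (intro sum_mono pair_weight_dyadic_block_ge[OF f]) (auto simp: B_def nats_le_def)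
    also have "\<dots> \<le> (\<Sum>m1\<in>B k. \<Sum>m2\<in>nats_le z. 4 * pair_weight f (m1, m2))"
      by (intro sum_mono sum_mono2) (auto simp: B_def W0)
    finally show ?thesis .
  qed
  have blocks_sq: "(\<Sum>k\<in>K. (sum a (B k)) ^ 2) \<le> 4 * sum (pair_weight f) (nats_le z \<times> nats_le z)"
  proof -
    have "(\<Sum>k\<in>K. (sum a (B k)) ^ 2) \<le> (\<Sum>k\<in>K. \<Sum>m1\<in>B k. \<Sum>m2\<in>nats_le z. 4 * pair_weight f (m1, m2))"
      by (intro sum_mono block_sq)
    also have "\<dots> = (\<Sum>m1\<in>nats_le z. \<Sum>m2\<in>nats_le z. 4 * pair_weight f (m1, m2))"
      unfolding K_def B_def by (rule sum.image_gen[symmetric]) simp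
    finally show ?thesis by (simp add: sum.cartesian_product sum_distrib_left)
  qed
  have "(\<Sum>m\<in>nats_le z. a m) ^ 2 = (\<Sum>k\<in>K. sum a (B k)) ^ 2"
    unfolding K_def B_def by (subst sum.image_gen) simp_all
  also have "\<dots> \<le> (\<Sum>k\<in>K. (sum a (B k)) ^ 2) * real (card K)"
    by (rule sum_squared_le_sum_of_squares)
  also have "\<dots> \<le> 4 * sum (pair_weight f) (nats_le z \<times> nats_le z) * (2 * ln z / ln 2)"
    using blocks_sq card_dyadic_blocks_le[OF z] unfolding K_def
    by (intro mult_mono) (auto intro: sum_nonneg W0)
  finally show ?thesis unfolding a_def by (simp add: mult_ac)
qed

lemma pair_weight_gcd_factor:
  assumes mult: "\<And>a b. coprime a b \<Longrightarrow> a > 0 \<Longrightarrow> b > 0 \<Longrightarrow> f (a * b) = f a * f b"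
    and sqf: "\<And>m. f m \<noteq> 0 \<Longrightarrow> m > 0 \<Longrightarrow> squarefree m"
    and m: "m1 > 0" "m2 > 0" "f m1 \<noteq> 0" "f m2 \<noteq> 0"
  defines "d \<equiv> gcd m1 m2"
  shows "pair_weight f (m1, m2) = f d ^ 2 / real d * pair_weight f (m1 div d, m2 div d)"
proof -
  define n1 where "n1 = m1 div d"
  define n2 where "n2 = m2 div d"
  have d0: "d > 0" using m unfolding d_def by simp
  have e: "m1 = d * n1" "m2 = d * n2" unfolding n1_def n2_def d_def by simp_all
  have n0: "n1 > 0" "n2 > 0" using e m by (auto intro: Nat.gr0I)
  have "coprime d n1" "coprime d n2"
    unfolding n1_def n2_def d_def using m by (auto intro!: squarefree_coprime_div sqf)
  hence f: "f m1 = f d * f n1" "f m2 = f d * f n2" using e d0 n0 mult by simp_all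
  have mx: "real (max m1 m2) = real d * real (max n1 n2)" unfolding e by (metis nat_mult_max_right of_nat_mult)
  have r: "real m1 = real d * real n1" "real m2 = real d * real n2" unfolding e by simp_all
  have "real (max n1 n2) > 0" using n0 by simp
  thus ?thesis
    unfolding pair_weight_def n1_def[symmetric] n2_def[symmetric] using d0
    by (simp add: f mx r field_simps power2_eq_square power3_eq_cube)
qed

lemma gcd_quotients_mem:
  assumes "m1 \<in> nats_le z" "m2 \<in> nats_le z"
  shows "gcd m1 m2 \<in> nats_le z" "(m1 div gcd m1 m2, m2 div gcd m1 m2) \<in> coprime_pairs z"
proof -
  define d where "d = gcd m1 m2"
  have m: "m1 \<ge> 1" "m2 \<ge> 1" "real m1 \<le> z" "real m2 \<le> z" using assms unfolding nats_le_def by auto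
  have d: "1 \<le> d" "d \<le> m1" using m unfolding d_def by (auto intro: dvd_imp_le simp: Suc_le_eq)
  have "1 \<le> m1 div d" "1 \<le> m2 div d" using m d unfolding d_def
    by (auto simp: div_greater_zero_iff Suc_le_eq intro!: dvd_imp_le)
  moreover have "coprime (m1 div d) (m2 div d)" unfolding d_def using m by (intro div_gcd_coprime) auto
  moreover have "real d \<le> z" "real (m1 div d) \<le> z" "real (m2 div d) \<le> z"
    using m d div_le_dividend[of m1 d] div_le_dividend[of m2 d] by (simp_all only: of_nat_le_iff)
  ultimately show "gcd m1 m2 \<in> nats_le z" "(m1 div gcd m1 m2, m2 div gcd m1 m2) \<in> coprime_pairs z"
    using d unfolding nats_le_def coprime_pairs_def d_def by auto
qed

lemma sum_pair_weight_le_coprime_pairs: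
  assumes nonneg: "\<And>m. 0 \<le> f m"
    and mult: "\<And>a b. coprime a b \<Longrightarrow> a > 0 \<Longrightarrow> b > 0 \<Longrightarrow> f (a * b) = f a * f b"
    and sqf: "\<And>m. f m \<noteq> 0 \<Longrightarrow> m > 0 \<Longrightarrow> squarefree m"
  shows "sum (pair_weight f) (nats_le z \<times> nats_le z) \<le> (\<Sum>d\<in>nats_le z. f d ^ 2 / real d) * sum (pair_weight f) (coprime_pairs z)"
proof -
  define S where "S = {q \<in> nats_le z \<times> nats_le z. f (fst q) \<noteq> 0 \<and> f (snd q) \<noteq> 0}"
  define \<phi> where "\<phi> = (\<lambda>(m1::nat, m2::nat). (gcd m1 m2, (m1 div gcd m1 m2, m2 div gcd m1 m2)))"
  define H where "H = (\<lambda>(d::nat, q). f d ^ 2 / real d * pair_weight f q)"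
  have finS: "finite S" unfolding S_def by (rule finite_subset[of _ "nats_le z \<times> nats_le z"]) auto
  have "sum (pair_weight f) (nats_le z \<times> nats_le z) = sum (pair_weight f) S"
    by (rule sum.mono_neutral_right) (auto simp: S_def pair_weight_def)
  also have "\<dots> = sum (H \<circ> \<phi>) S"
  proof (intro sum.cong refl)
    fix q assume "q \<in> S"
    then obtain m1 m2 where "q = (m1, m2)" "m1 > 0" "m2 > 0" "f m1 \<noteq> 0" "f m2 \<noteq> 0"
      unfolding S_def nats_le_def by auto
    thus "pair_weight f q = (H \<circ> \<phi>) q"
      using pair_weight_gcd_factor[OF mult sqf, of m1 m2] by (simp add: H_def \<phi>_def)
  qed
  also have "\<dots> = sum H (\<phi> ` S)"
  proof (rule sum.reindex[symmetric], rule inj_onI)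
    fix q q' assume "q \<in> S" "q' \<in> S" "\<phi> q = \<phi> q'"
    thus "q = q'" unfolding \<phi>_def
      by (cases q, cases q') (auto, metis dvd_mult_div_cancel gcd_dvd1, metis dvd_mult_div_cancel gcd_dvd2)
  qed
  also have "\<dots> \<le> sum H (nats_le z \<times> coprime_pairs z)"
  proof (rule sum_mono2)
    show "\<phi> ` S \<subseteq> nats_le z \<times> coprime_pairs z"
      using gcd_quotients_mem unfolding S_def \<phi>_def by auto
  qed (auto simp: H_def intro!: mult_nonneg_nonneg divide_nonneg_nonneg pair_weight_nonneg nonneg)
  also have "\<dots> = (\<Sum>d\<in>nats_le z. f d ^ 2 / real d) * sum (pair_weight f) (coprime_pairs z)"
    unfolding H_def by (simp add: sum.cartesian_product[symmetric] sum_product)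
  finally show ?thesis .
qed

lemma sum_le_prod_one_plus:
  fixes h f :: "nat \<Rightarrow> real"
  assumes "finite D" "finite Q" "\<And>p. p \<in> Q \<Longrightarrow> prime p" "\<And>p. p \<in> Q \<Longrightarrow> 0 \<le> f p"
    and "\<And>d. d \<in> D \<Longrightarrow> h d \<noteq> 0 \<Longrightarrow> d > 0 \<and> prime_factors d \<subseteq> Q \<and> d = \<Prod>(prime_factors d) \<and> h d = (\<Prod>p\<in>prime_factors d. f p)"
  shows "sum h D \<le> (\<Prod>p\<in>Q. 1 + f p)"
proof -
  define Dn where "Dn = {d\<in>D. h d \<noteq> 0}"
  have "sum h D = sum h Dn" unfolding Dn_def by (rule sum.mono_neutral_right) (use assms in auto)
  also have "\<dots> = sum (\<lambda>d. \<Prod>p\<in>prime_factors d. f p) Dn"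
    by (rule sum.cong) (use assms in \<open>auto simp: Dn_def\<close>)
  also have "\<dots> = sum (\<lambda>A. \<Prod>p\<in>A. f p) (prime_factors ` Dn)"
  proof (rule sum.reindex[symmetric, unfolded comp_def])
    show "inj_on prime_factors Dn"
    proof (rule inj_onI)
      fix a b assume "a \<in> Dn" "b \<in> Dn" "prime_factors a = prime_factors b"
      thus "a = b" using assms(5) unfolding Dn_def by (metis (mono_tags, lifting) mem_Collect_eq)
    qed
  qed
  also have "\<dots> \<le> sum (\<lambda>A. \<Prod>p\<in>A. f p) (Pow Q)"
  proof (rule sum_mono2)
    show "finite (Pow Q)" using assms by simp
    show "prime_factors ` Dn \<subseteq> Pow Q" using assms(5) unfolding Dn_def by auto
    fix A assume "A \<in> Pow Q - prime_factors ` Dn"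
    thus "0 \<le> (\<Prod>p\<in>A. f p)" using assms(4) by (auto intro: prod_nonneg)
  qed
  also have "\<dots> = (\<Prod>p\<in>Q. f p + 1)" using prod_add[of Q f "\<lambda>_. 1"] assms by simp
  finally show ?thesis by (simp add: add_ac)
qed

lemma sum_recip_n_pred_n_le: assumes "2 \<le> N" shows "(\<Sum>n\<in>{N..M}. 1 / (real n * (real n - 1))) \<le> 1 / (real N - 1)"
proof (cases "N \<le> M")
  case True
  have "(\<Sum>n\<in>{N..M}. 1 / (real n * (real n - 1))) = 1 / (real N - 1) - 1 / real M"
    using True
  proof (induction M rule: dec_induct)
    case base
    have "real N - 1 > 0" using assms by simp
    thus ?case using assms by (simp add: divide_simps)
  next
    case (step M)
    have M: "real M \<ge> 2" using step assms by simp
    have "(\<Sum>n\<in>{N..Suc M}. 1 / (real n * (real n - 1))) = 1 / (real N - 1) - 1 / real M + 1 / ((real M + 1) * real M)"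
      using step by (simp add: sum.cl_ivl_Suc)
    also have "\<dots> = 1 / (real N - 1) - 1 / real (Suc M)" using M by (simp add: divide_simps) (simp add: algebra_simps)
    finally show ?case .
  qed
  thus ?thesis by simp
qed (use assms in simp)

lemma sum_t_pp_sq_div_le_2:
  assumes l: "0 \<le> lam x" and l3: "lam x ^ 2 \<ge> 3"
  shows "(\<Sum>p | prime p \<and> lam x ^ 2 \<le> real p \<and> real p \<le> z. t_pp x p 1 ^ 2 / real p) \<le> 2"
proof -
  define Q where "Q = {p. prime p \<and> lam x ^ 2 \<le> real p \<and> real p \<le> z}"
  define N where "N = nat \<lceil>lam x ^ 2\<rceil>"
  have N: "real N \<ge> lam x ^ 2" unfolding N_def by (simp add: real_nat_ceiling_ge)
  hence N2: "N \<ge> 2" using l3 by simp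
  have "(\<Sum>p\<in>Q. t_pp x p 1 ^ 2 / real p) \<le> (\<Sum>p\<in>Q. lam x ^ 2 / (real p * (real p - 1)))"
    using l3 by (intro sum_mono t_pp_sq_div_le[OF l]) (auto simp: Q_def)
  also have "\<dots> \<le> (\<Sum>n\<in>{N..nat \<lfloor>z\<rfloor>}. lam x ^ 2 / (real n * (real n - 1)))"
  proof (rule sum_mono2)
    show "Q \<subseteq> {N..nat \<lfloor>z\<rfloor>}" unfolding Q_def N_def
      by (auto simp: le_nat_floor nat_le_iff ceiling_le_iff)
    fix n assume "n \<in> {N..nat \<lfloor>z\<rfloor>} - Q"
    hence "real n \<ge> 2" using N2 by simp
    thus "0 \<le> lam x ^ 2 / (real n * (real n - 1))" by simp
  qed simp
  also have "\<dots> = lam x ^ 2 * (\<Sum>n\<in>{N..nat \<lfloor>z\<rfloor>}. 1 / (real n * (real n - 1)))"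
    by (simp add: sum_distrib_left)
  also have "\<dots> \<le> lam x ^ 2 * (1 / (real N - 1))"
    by (intro mult_left_mono sum_recip_n_pred_n_le N2) simp
  also have "\<dots> \<le> 2"
    using N l3 by (simp add: divide_simps)
  finally show ?thesis unfolding Q_def .
qed

text \<open>Expanding the square-free \<open>d\<close> into its prime factors gives
  \<open>\<Sum>\<^sub>d t(d)\<^sup>2/d \<le> \<Prod>\<^sub>p (1 + t(p)\<^sup>2/p) \<le> exp (\<Sum>\<^sub>p t(p)\<^sup>2/p)\<close>.\<close>

lemma sum_t_fun_sq_div_le:
  assumes l: "0 \<le> lam x" and l3: "lam x ^ 2 \<ge> 3"
  shows "(\<Sum>d\<in>nats_le z. t_fun x d ^ 2 / real d) \<le> exp 2"
proof -
  define Q where "Q = {p. prime p \<and> lam x ^ 2 \<le> real p \<and> real p \<le> z}"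
  define f where "f = (\<lambda>p. t_pp x p 1 ^ 2 / real p)"
  have finQ: "finite Q" unfolding Q_def
    by (rule finite_subset[of _ "{..nat \<lfloor>z\<rfloor>}"]) (auto simp: le_nat_floor)
  have "(\<Sum>d\<in>nats_le z. t_fun x d ^ 2 / real d) \<le> (\<Prod>p\<in>Q. 1 + f p)"
  proof (rule sum_le_prod_one_plus)
    fix d assume d: "d \<in> nats_le z" "t_fun x d ^ 2 / real d \<noteq> 0"
    have d1: "d > 0" "real d \<le> z" using d unfolding nats_le_def by auto
    have tnz: "t_fun x d \<noteq> 0" using d by auto
    have deq: "d = \<Prod>(prime_factors d)"
      by (rule squarefree_eq_prod_prime_factors[OF t_fun_nonzero_squarefree[OF tnz d1(1)]])
    have "prime_factors d \<subseteq> Q"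
    proof
      fix p assume p: "p \<in> prime_factors d"
      have "p \<le> d" using p d1 by (auto intro: dvd_imp_le simp: in_prime_factors_iff)
      hence "real p \<le> z" using d1 by linarith
      thus "p \<in> Q" using p t_fun_nonzero_prime_factorD(2)[OF tnz p] unfolding Q_def by auto
    qed
    moreover have "t_fun x d ^ 2 / real d = (\<Prod>p\<in>prime_factors d. f p)"
    proof -
      have "t_fun x d = (\<Prod>p\<in>prime_factors d. t_pp x p 1)"
        by (subst deq) (rule t_fun_prod_primes, auto)
      moreover have "real d = (\<Prod>p\<in>prime_factors d. real p)" by (subst deq) (simp add: of_nat_prod)
      ultimately show ?thesis unfolding f_def by (simp add: prod_power_distrib prod_dividef)
    qed
    ultimately show "d > 0 \<and> prime_factors d \<subseteq> Q \<and> d = \<Prod>(prime_factors d) \<and>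
        t_fun x d ^ 2 / real d = (\<Prod>p\<in>prime_factors d. f p)"
      using d1 deq by simp
  qed (use finQ in \<open>auto simp: Q_def f_def\<close>)
  also have "\<dots> \<le> exp (sum f Q)" by (rule prod_le_exp_sum) (simp add: f_def)
  also have "\<dots> \<le> exp 2"
    using sum_t_pp_sq_div_le_2[OF l l3, of z] unfolding f_def Q_def by simp
  finally show ?thesis .
qed

lemma coprime_pair_sum_ge:
  assumes l: "0 \<le> lam x" and l3: "lam x ^ 2 \<ge> 3" and z: "z \<ge> 2"
  shows "ln 2 / (8 * exp 2) / ln z * (\<Sum>m\<in>nats_le z. t_fun x m / sqrt (real m)) ^ 2
         \<le> sum (pair_weight (t_fun x)) (coprime_pairs z)"
proof -
  define S where "S = (\<Sum>m\<in>nats_le z. t_fun x m / sqrt (real m))"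
  define L where "L = sum (pair_weight (t_fun x)) (coprime_pairs z)"
  have L0: "L \<ge> 0" unfolding L_def by (intro sum_nonneg pair_weight_nonneg t_fun_nonneg l)
  have lnz: "ln z > 0" using z by simp
  have "S ^ 2 \<le> 8 * ln z / ln 2 * sum (pair_weight (t_fun x)) (nats_le z \<times> nats_le z)"
    unfolding S_def by (rule sum_div_sqrt_squared_le_pair_weight[OF t_fun_nonneg[OF l] z])
  also have "\<dots> \<le> 8 * ln z / ln 2 * ((\<Sum>d\<in>nats_le z. t_fun x d ^ 2 / real d) * L)"
    unfolding L_def using lnz t_fun_nonneg[OF l] t_fun_mult t_fun_nonzero_squarefree
    by (intro mult_left_mono sum_pair_weight_le_coprime_pairs) auto
  also have "\<dots> \<le> 8 * ln z / ln 2 * (exp 2 * L)"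
    using lnz L0 sum_t_fun_sq_div_le[OF l l3] by (intro mult_left_mono mult_right_mono) auto
  finally show ?thesis
    using lnz unfolding S_def[symmetric] L_def[symmetric] by (simp add: field_simps)
qed

section \<open>Large \<open>z\<close>: products of primes just above \<open>\<lambda>\<^sup>2\<close>\<close>

lemma exp_sum_le_prod_one_plus:
  fixes y :: "'a \<Rightarrow> real"
  assumes "\<And>p. p \<in> P \<Longrightarrow> 0 \<le> y p \<and> y p \<le> \<delta>" "\<delta> \<le> 1"
  shows "exp ((1 - \<delta>) * sum y P) \<le> (\<Prod>p\<in>P. 1 + y p)"
proof (cases "finite P")
  case True
  have "exp ((1 - \<delta>) * sum y P) = (\<Prod>p\<in>P. exp ((1 - \<delta>) * y p))"
    using True by (simp add: sum_distrib_left exp_sum)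
  also have "\<dots> \<le> (\<Prod>p\<in>P. 1 + y p)"
  proof (intro prod_mono conjI)
    fix p assume p: "p \<in> P"
    have y: "0 \<le> y p" "y p \<le> \<delta>" using assms(1)[OF p] by auto
    have "(1 - \<delta>) * y p \<le> y p - (y p)\<^sup>2"
      using mult_left_mono[OF y(2) y(1)] by (simp add: power2_eq_square algebra_simps)
    also have "\<dots> \<le> ln (1 + y p)" using y assms(2) by (intro ln_one_plus_pos_lower_bound) auto
    finally have "exp ((1 - \<delta>) * y p) \<le> exp (ln (1 + y p))" by simp
    thus "exp ((1 - \<delta>) * y p) \<le> 1 + y p" using y by (simp add: add_pos_nonneg)
  qed simp
  finally show ?thesis .
qed simp

text \<open>Rankin's trick: the subsets with more than \<open>k\<close> elements contribute at most
  \<open>e\<^sup>-\<^sup>k \<Prod> (1 + e y\<^sub>p)\<close>.\<close>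

lemma sum_small_subsets_ge:
  fixes y :: "'a \<Rightarrow> real"
  assumes P: "finite P" and y: "\<And>p. p \<in> P \<Longrightarrow> 0 \<le> y p"
  shows "(\<Prod>p\<in>P. 1 + y p) - exp (- real k) * (\<Prod>p\<in>P. 1 + exp 1 * y p)
         \<le> (\<Sum>A\<in>{A\<in>Pow P. card A \<le> k}. \<Prod>p\<in>A. y p)"
proof -
  define Lo where "Lo = {A\<in>Pow P. card A \<le> k}"
  define Hi where "Hi = {A\<in>Pow P. \<not> card A \<le> k}"
  have tot: "(\<Prod>p\<in>P. 1 + g p) = (\<Sum>A\<in>Pow P. \<Prod>p\<in>A. g p)" for g :: "'a \<Rightarrow> real"
    using prod_add[OF P, of g "\<lambda>_. 1"] by (simp add: add_ac)
  have PL: "Pow P = Lo \<union> Hi" "Lo \<inter> Hi = {}" unfolding Lo_def Hi_def by auto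
  have fin: "finite Lo" "finite Hi" using P unfolding Lo_def Hi_def by auto
  have split: "(\<Sum>A\<in>Pow P. \<Prod>p\<in>A. y p) = (\<Sum>A\<in>Lo. \<Prod>p\<in>A. y p) + (\<Sum>A\<in>Hi. \<Prod>p\<in>A. y p)"
    unfolding PL(1) using fin PL(2) by (rule sum.union_disjoint)
  have py: "0 \<le> (\<Prod>p\<in>A. y p)" if "A \<in> Pow P" for A using y that by (auto intro: prod_nonneg)
  have pey: "(\<Prod>p\<in>A. exp 1 * y p) = exp (real (card A)) * (\<Prod>p\<in>A. y p)" for A
    by (simp add: prod.distrib exp_of_nat_mult[symmetric])
  have "(\<Sum>A\<in>Hi. \<Prod>p\<in>A. y p) \<le> (\<Sum>A\<in>Hi. exp (- real k) * (\<Prod>p\<in>A. exp 1 * y p))"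
  proof (intro sum_mono)
    fix A assume A: "A \<in> Hi"
    hence "real (card A) - real k \<ge> 0" unfolding Hi_def by auto
    hence e: "1 \<le> exp (real (card A) - real k)" by simp
    have "(\<Prod>p\<in>A. y p) \<le> exp (real (card A) - real k) * (\<Prod>p\<in>A. y p)"
      using e py[of A] A unfolding Hi_def by (simp add: mult_le_cancel_right1)
    also have "\<dots> = exp (- real k) * (\<Prod>p\<in>A. exp 1 * y p)"
      unfolding pey by (simp add: exp_diff exp_minus field_simps)
    finally show "(\<Prod>p\<in>A. y p) \<le> exp (- real k) * (\<Prod>p\<in>A. exp 1 * y p)" .
  qed
  also have "\<dots> \<le> (\<Sum>A\<in>Pow P. exp (- real k) * (\<Prod>p\<in>A. exp 1 * y p))"
  proof (rule sum_mono2)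
    show "finite (Pow P)" using P by simp
    show "Hi \<subseteq> Pow P" unfolding Hi_def by auto
    fix A assume "A \<in> Pow P - Hi"
    hence "A \<subseteq> P" by auto
    thus "0 \<le> exp (- real k) * (\<Prod>p\<in>A. exp 1 * y p)" using y
      by (intro mult_nonneg_nonneg prod_nonneg) auto
  qed
  also have "\<dots> = exp (- real k) * (\<Prod>p\<in>P. 1 + exp 1 * y p)"
    by (simp add: tot sum_distrib_left)
  finally have "(\<Sum>A\<in>Hi. \<Prod>p\<in>A. y p) \<le> exp (- real k) * (\<Prod>p\<in>P. 1 + exp 1 * y p)" .
  moreover have "(\<Prod>p\<in>P. 1 + y p) = (\<Sum>A\<in>Lo. \<Prod>p\<in>A. y p) + (\<Sum>A\<in>Hi. \<Prod>p\<in>A. y p)"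
    by (simp add: tot split)
  ultimately show ?thesis unfolding Lo_def by linarith
qed

lemma real_sqrt_prod: "sqrt (\<Prod>p\<in>A. f p) = (\<Prod>p\<in>A. sqrt (f p))"
  by (induction A rule: infinite_finite_induct) (auto simp: real_sqrt_mult)

lemma sum_t_fun_div_sqrt_ge_prime_subsets:
  assumes l: "0 \<le> lam x"
    and A: "\<And>A. A \<in> \<A> \<Longrightarrow> finite A \<and> (\<forall>p\<in>A. prime p) \<and> real (\<Prod>A) \<le> z"
  shows "(\<Sum>A\<in>\<A>. \<Prod>p\<in>A. t_pp x p 1 / sqrt (real p)) \<le> (\<Sum>m\<in>nats_le z. t_fun x m / sqrt (real m))"
proof -
  define g where "g = (\<lambda>m. t_fun x m / sqrt (real m))"
  have eq: "(\<Prod>p\<in>A. t_pp x p 1 / sqrt (real p)) = g (\<Prod>A)" if "A \<in> \<A>" for A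
  proof -
    have fa: "finite A" "\<And>p. p \<in> A \<Longrightarrow> prime p" using A[OF that] by auto
    have "g (\<Prod>A) = (\<Prod>p\<in>A. t_pp x p 1) / sqrt (\<Prod>p\<in>A. real p)"
      unfolding g_def using t_fun_prod_primes[OF fa] by (simp add: of_nat_prod)
    also have "\<dots> = (\<Prod>p\<in>A. t_pp x p 1 / sqrt (real p))"
      using fa by (simp add: real_sqrt_prod prod_dividef)
    finally show ?thesis by simp
  qed
  have inj: "inj_on Prod \<A>"
  proof (rule inj_onI)
    fix A B assume "A \<in> \<A>" "B \<in> \<A>" "\<Prod>A = \<Prod>B"
    thus "A = B" using prime_factors_prod_primes A by metis
  qed
  have "(\<Sum>A\<in>\<A>. \<Prod>p\<in>A. t_pp x p 1 / sqrt (real p)) = (\<Sum>A\<in>\<A>. g (\<Prod>A))"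
    by (intro sum.cong refl eq)
  also have "\<dots> = sum g (Prod ` \<A>)" using inj by (simp add: sum.reindex)
  also have "\<dots> \<le> sum g (nats_le z)"
  proof (rule sum_mono2)
    show "Prod ` \<A> \<subseteq> nats_le z"
    proof
      fix m assume "m \<in> Prod ` \<A>"
      then obtain A where A': "A \<in> \<A>" "m = \<Prod>A" by auto
      have "0 < \<Prod>A" by (rule prod_pos) (use A[OF A'(1)] in \<open>auto intro: prime_gt_0_nat\<close>)
      hence "1 \<le> m" using A' by simp
      thus "m \<in> nats_le z" using A[OF A'(1)] A' unfolding nats_le_def by auto
    qed
    show "\<And>b. b \<in> nats_le z - Prod ` \<A> \<Longrightarrow> 0 \<le> g b" unfolding g_def using t_fun_nonneg[OF l] by simp
  qed simp
  finally show ?thesis unfolding g_def .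
qed

lemma div_one_plus_sq_bounds:
  fixes r b :: real
  assumes "0 \<le> r" "r \<le> b"
  shows "r * (1 - b\<^sup>2) \<le> r / (1 + r\<^sup>2)" "r / (1 + r\<^sup>2) \<le> r"
proof -
  have "r * (1 - r\<^sup>2) * (1 + r\<^sup>2) = r * (1 - r ^ 4)" by (simp add: algebra_simps power2_eq_square power4_eq_xxxx)
  also have "\<dots> \<le> r" using assms(1) by (simp add: mult_left_le)
  finally have "r * (1 - r\<^sup>2) \<le> r / (1 + r\<^sup>2)" by (simp add: pos_le_divide_eq add_pos_nonneg)
  moreover have "r * (1 - b\<^sup>2) \<le> r * (1 - r\<^sup>2)" using assms by (intro mult_left_mono power_mono) auto
  ultimately show "r * (1 - b\<^sup>2) \<le> r / (1 + r\<^sup>2)" by linarith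
  show "r / (1 + r\<^sup>2) \<le> r" using assms(1) by (simp add: divide_le_eq add_pos_nonneg mult_le_cancel_left1)
qed

lemma t_pp_div_sqrt_bounds:
  assumes l1: "lam x \<ge> 1" and L1: "ln (lam x ^ 2) \<ge> 1" and p: "prime p" "lam x ^ 2 < real p"
    "real p \<le> exp ((ln (lam x))^2)"
  shows "(1 - 1 / (ln (lam x ^ 2))^2) * (lam x / (real p * ln (real p))) \<le> t_pp x p 1 / sqrt (real p)"
    "t_pp x p 1 / sqrt (real p) \<le> lam x / (real p * ln (real p))"
    "lam x / (real p * ln (real p)) \<le> 1 / lam x"
proof -
  define l where "l = lam x"
  define L where "L = ln (l ^ 2)"
  define r where "r = l / (sqrt (real p) * ln (real p))"
  have lpos: "l > 0" using l1 unfolding l_def by simp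
  have p1: "real p > 1" using prime_gt_1_nat[OF p(1)] by simp
  have lnp: "ln (real p) \<ge> L" unfolding L_def using p(2) lpos l_def p1 by (subst ln_le_cancel_iff) auto
  have Lp: "L \<ge> 1" using L1 unfolding L_def l_def .
  have sp: "sqrt (real p) \<ge> l" using p(2) lpos unfolding l_def
    by (metis less_eq_real_def real_sqrt_abs real_sqrt_le_mono abs_of_pos)
  have rr: "r_pp x p 1 = r" unfolding r_pp_def r_def l_def using p by auto
  have lnp0: "ln (real p) > 0" using p1 by simp
  have r0: "r \<ge> 0" unfolding r_def using lpos lnp0 by simp
  have "r \<le> l / (l * L)" unfolding r_def
  proof (rule divide_left_mono)
    show "l * L \<le> sqrt (real p) * ln (real p)" using lpos Lp lnp sp by (intro mult_mono) auto
    have "0 < sqrt (real p) * ln (real p)" using p1 by simp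
    moreover have "0 < l * L" using lpos Lp by simp
    ultimately show "0 < sqrt (real p) * ln (real p) * (l * L)" by simp
  qed (use lpos in simp)
  hence rL: "r \<le> 1 / L" using lpos by simp
  have tp: "t_pp x p 1 = r / (1 + r^2)" unfolding t_pp_def rr ..
  have tlow: "r * (1 - (1 / L)^2) \<le> t_pp x p 1" and tup: "t_pp x p 1 \<le> r"
    unfolding tp using div_one_plus_sq_bounds[OF r0 rL] by auto
  have sp0: "sqrt (real p) > 0" using p1 by simp
  have rs: "r / sqrt (real p) = l / (real p * ln (real p))"
    unfolding r_def using sp0 p1 by (simp add: field_simps)
  have "(1 - 1 / L^2) * (l / (real p * ln (real p))) = (1 - 1 / L^2) * (r / sqrt (real p))"
    using rs by simp
  also have "\<dots> = r * (1 - 1/L^2) / sqrt (real p)" by (simp add: mult.commute)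
  also have "\<dots> \<le> t_pp x p 1 / sqrt (real p)" using tlow sp0 by (intro divide_right_mono) (auto simp: power_one_over)
  finally show "(1 - 1 / (ln (lam x ^ 2))^2) * (lam x / (real p * ln (real p))) \<le> t_pp x p 1 / sqrt (real p)"
    unfolding L_def l_def .
  have "t_pp x p 1 / sqrt (real p) \<le> r / sqrt (real p)" using tup sp0 by (intro divide_right_mono) auto
  thus "t_pp x p 1 / sqrt (real p) \<le> lam x / (real p * ln (real p))" using rs unfolding l_def by simp
  have "l / (real p * ln (real p)) \<le> l / (l^2 * 1)"
  proof (rule divide_left_mono)
    show "l^2 * 1 \<le> real p * ln (real p)" using lpos p(2) lnp Lp l_def by (intro mult_mono) auto
    show "0 < real p * ln (real p) * (l^2 * 1)" using lpos p1 by simp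
  qed (use lpos in simp)
  also have "\<dots> = 1 / l" using lpos by (simp add: power2_eq_square)
  finally show "lam x / (real p * ln (real p)) \<le> 1 / lam x" unfolding l_def .
qed

lemma sum_t_pp_div_sqrt_primes_bounds:
  fixes x c :: real and J :: nat
  defines "l \<equiv> lam x" and "L \<equiv> ln (lam x ^ 2)"
  defines "P \<equiv> primes_between (lam x ^ 2) (exp (ln (lam x ^ 2) * c ^ J))"
  assumes l3: "lam x \<ge> 3" and c: "c > 1" and L8: "L \<ge> 8" and W: "L * c ^ J \<le> (ln l)\<^sup>2"
  shows "(1 - 1 / L\<^sup>2) * l * ((1 - (1 / c) ^ J) / (c * L) - 8 * real J / L\<^sup>2)
           \<le> (\<Sum>p\<in>P. t_pp x p 1 / sqrt (real p))"
    and "(\<Sum>p\<in>P. t_pp x p 1 / sqrt (real p)) \<le> l * c ^ J / L"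
    and "\<And>p. p \<in> P \<Longrightarrow> t_pp x p 1 / sqrt (real p) \<le> 1 / l"
proof -
  define y where "y = (\<lambda>p. t_pp x p 1 / sqrt (real p))"
  define W where "W = exp (L * c ^ J)"
  have l0: "l > 0" "l \<ge> 3" using l3 unfolding l_def by auto
  have K1: "c ^ J \<ge> 1" using c by (simp add: one_le_power)
  have expL: "exp L = l\<^sup>2" unfolding L_def l_def using l0 l_def by simp
  have l2: "l\<^sup>2 > 1" using l0 by (simp add: power2_eq_square) (smt (verit) mult_less_cancel_left1)
  have Wge: "l\<^sup>2 \<le> W" unfolding W_def using L8 K1 expL
    by (metis exp_le_cancel_iff mult_le_cancel_left1 order_trans zero_less_numeral less_le not_le)
  have P: "P = primes_between (l\<^sup>2) W" unfolding P_def W_def l_def L_def ..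
  have yb: "(1 - 1 / L\<^sup>2) * (l / (real p * ln (real p))) \<le> y p"
           "y p \<le> l / (real p * ln (real p))" "l / (real p * ln (real p)) \<le> 1 / l" if "p \<in> P" for p
  proof -
    have "real p \<le> W" using that unfolding P primes_between_def by auto
    also have "W \<le> exp ((ln l)\<^sup>2)" unfolding W_def using W by simp
    finally show "(1 - 1 / L\<^sup>2) * (l / (real p * ln (real p))) \<le> y p"
      "y p \<le> l / (real p * ln (real p))" "l / (real p * ln (real p)) \<le> 1 / l"
      using t_pp_div_sqrt_bounds[of x p] that l0 L8 unfolding P primes_between_def y_def L_def l_def by auto
  qed
  have lsum: "l * (\<Sum>p\<in>P. 1 / (real p * ln (real p))) = (\<Sum>p\<in>P. l / (real p * ln (real p)))"
    by (simp add: sum_distrib_left)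
  show "\<And>p. p \<in> P \<Longrightarrow> y p \<le> 1 / l" using yb by (meson order_trans)
  have "(\<Sum>p\<in>P. y p) \<le> l * (\<Sum>p\<in>P. 1 / (real p * ln (real p)))"
    unfolding lsum by (intro sum_mono yb)
  also have "\<dots> \<le> l * ((L * c ^ J - L + 8) / L\<^sup>2)"
    using sum_recip_p_ln_p_le[OF l2 Wge] l0 unfolding P W_def L_def l_def by (intro mult_left_mono) auto
  also have "\<dots> \<le> l * (c ^ J / L)"
    using L8 l0 by (intro mult_left_mono) (auto simp: divide_simps power2_eq_square)
  finally show "(\<Sum>p\<in>P. y p) \<le> l * c ^ J / L" by simp
  have "1 * 1 \<le> L * L" using L8 by (intro mult_mono) auto
  hence "0 \<le> (1 - 1 / L\<^sup>2) * l" using l0 by (simp add: power2_eq_square)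
  hence "(1 - 1 / L\<^sup>2) * l * ((1 - (1 / c) ^ J) / (c * L) - 8 * real J / L\<^sup>2)
        \<le> (1 - 1 / L\<^sup>2) * l * (\<Sum>p\<in>P. 1 / (real p * ln (real p)))"
    using sum_recip_p_ln_p_geometric_ge[of L c J] L8 c expL unfolding P W_def
    by (intro mult_left_mono) auto
  also have "\<dots> = (\<Sum>p\<in>P. (1 - 1 / L\<^sup>2) * (l / (real p * ln (real p))))"
    using lsum by (simp add: sum_distrib_left mult.assoc)
  also have "\<dots> \<le> (\<Sum>p\<in>P. y p)" by (intro sum_mono yb)
  finally show "(1 - 1 / L\<^sup>2) * l * ((1 - (1 / c) ^ J) / (c * L) - 8 * real J / L\<^sup>2) \<le> (\<Sum>p\<in>P. y p)" .
qed

lemma sum_t_fun_div_sqrt_ge_exp: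
  fixes x W z :: real and P :: "nat set" and k :: nat
  defines "Y \<equiv> (\<Sum>p\<in>P. t_pp x p 1 / sqrt (real p))"
  assumes l: "lam x \<ge> 1" and P: "finite P"
    and P_le: "\<And>p. p \<in> P \<Longrightarrow> prime p \<and> real p \<le> W \<and> t_pp x p 1 / sqrt (real p) \<le> 1 / lam x"
    and W: "W \<ge> 1" and k: "real k \<ge> 4 * Y + 1" and z: "W ^ k \<le> z"
  shows "exp ((1 - 1 / lam x) * Y) / 2 \<le> (\<Sum>m\<in>nats_le z. t_fun x m / sqrt (real m))"
proof -
  define y where "y = (\<lambda>p. t_pp x p 1 / sqrt (real p))"
  have l0: "0 \<le> lam x" using l by simp
  have y0: "0 \<le> y p" for p unfolding y_def using t_pp_nonneg[OF l0] by simp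
  have Y0: "0 \<le> Y" unfolding Y_def using y0 y_def by (simp add: sum_nonneg)
  have "exp ((1 - 1 / lam x) * Y) \<le> (\<Prod>p\<in>P. 1 + y p)"
    unfolding Y_def y_def using P_le y0 l by (intro exp_sum_le_prod_one_plus) (auto simp: y_def)
  moreover have "exp (- real k) * (\<Prod>p\<in>P. 1 + exp 1 * y p) \<le> exp ((1 - 1 / lam x) * Y) / 2"
  proof -
    have "(\<Prod>p\<in>P. 1 + exp 1 * y p) \<le> exp (\<Sum>p\<in>P. exp 1 * y p)"
      by (rule prod_le_exp_sum) (simp add: y0)
    also have "(\<Sum>p\<in>P. exp 1 * y p) = exp 1 * Y" unfolding Y_def y_def by (simp add: sum_distrib_left)
    finally have "(\<Prod>p\<in>P. 1 + exp 1 * y p) \<le> exp (exp 1 * Y)" .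
    hence "exp (- real k) * (\<Prod>p\<in>P. 1 + exp 1 * y p) \<le> exp (exp 1 * Y - real k)"
      by (simp add: exp_diff exp_minus field_simps)
    also have "\<dots> \<le> exp ((1 - 1 / lam x) * Y - 1)"
    proof -
      have "exp 1 * Y \<le> 3 * Y" using exp_le Y0 by (intro mult_right_mono) auto
      moreover have "(1 - 1 / lam x) * Y \<ge> 0" using l Y0 by simp
      ultimately have "exp 1 * Y - real k \<le> (1 - 1 / lam x) * Y - 1" using k Y0 by linarith
      thus ?thesis by simp
    qed
    also have "\<dots> = exp ((1 - 1 / lam x) * Y) / exp 1" by (rule exp_diff)
    also have "\<dots> \<le> exp ((1 - 1 / lam x) * Y) / 2"
      using exp_ge_add_one_self[of 1] by (intro divide_left_mono) auto
    finally show ?thesis .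
  qed
  moreover have "(\<Prod>p\<in>P. 1 + y p) - exp (- real k) * (\<Prod>p\<in>P. 1 + exp 1 * y p)
                 \<le> (\<Sum>A\<in>{A\<in>Pow P. card A \<le> k}. \<Prod>p\<in>A. y p)"
    by (rule sum_small_subsets_ge[OF P y0])
  moreover have "(\<Sum>A\<in>{A\<in>Pow P. card A \<le> k}. \<Prod>p\<in>A. y p) \<le> (\<Sum>m\<in>nats_le z. t_fun x m / sqrt (real m))"
    unfolding y_def
  proof (rule sum_t_fun_div_sqrt_ge_prime_subsets[OF l0])
    fix A assume A: "A \<in> {A\<in>Pow P. card A \<le> k}"
    hence fin: "finite A" using P finite_subset by auto
    have "real (\<Prod>A) = (\<Prod>p\<in>A. real p)" by (simp add: of_nat_prod)
    also have "\<dots> \<le> (\<Prod>p\<in>A. W)" using A P_le by (intro prod_mono) auto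
    also have "\<dots> \<le> W ^ k" using W A by (simp add: power_increasing)
    finally show "finite A \<and> (\<forall>p\<in>A. prime p) \<and> real (\<Prod>A) \<le> z" using fin A P_le z by auto
  qed
  ultimately show ?thesis by linarith
qed

lemma truncation_bounds:
  fixes a z :: real
  assumes a: "a \<ge> 3" and z: "z \<ge> 1" "ln z > 3 * a"
  shows "3 * a < ln (min z (exp (4 * a)))" "ln (min z (exp (4 * a))) \<le> 4 * a"
    "min z (exp (4 * a)) \<ge> 2"
proof -
  define z1 where "z1 = min z (exp (4 * a))"
  have z1: "z1 > 0" "z1 \<le> exp (4 * a)" using z unfolding z1_def by auto
  have "ln z1 \<le> ln (exp (4 * a))" using z1 by (subst ln_le_cancel_iff) auto
  thus "ln z1 \<le> 4 * a" by simp
  show "3 * a < ln z1" using z a unfolding z1_def by (auto simp: min_def)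
  hence "exp 1 < exp (ln z1)" using a by simp
  thus "z1 \<ge> 2" using z1 exp_ge_add_one_self[of 1] by simp
qed

lemma sum_t_fun_div_sqrt_sq_ge_exp:
  fixes x z c :: real and J :: nat
  defines "l \<equiv> lam x" and "L \<equiv> ln (lam x ^ 2)" and "LL \<equiv> ln (ln (lam x))"
  defines "Ylow \<equiv> (1 - 1 / L\<^sup>2) * l * ((1 - (1 / c) ^ J) / (c * L) - 8 * real J / L\<^sup>2)"
  assumes l3: "lam x \<ge> 3" and c: "c > 1" and L8: "L \<ge> 8" and LL1: "LL \<ge> 1"
    and W: "L * c ^ J \<le> (ln l)\<^sup>2"
    and k: "4 * l * c ^ J / L + 2 \<le> 3 * l * LL / (L * c ^ J)"
    and z: "z > 0" "3 * l * LL < ln z"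
  shows "exp (2 * (1 - 1 / l) * Ylow) / 4 \<le> (\<Sum>m\<in>nats_le z. t_fun x m / sqrt (real m))\<^sup>2"
proof -
  define K where "K = c ^ J"
  define W where "W = exp (L * K)"
  define P where "P = primes_between (l\<^sup>2) W"
  define Y where "Y = (\<Sum>p\<in>P. t_pp x p 1 / sqrt (real p))"
  define k where "k = nat \<lfloor>3 * l * LL / (L * K)\<rfloor>"
  have l0: "l \<ge> 3" using l3 unfolding l_def .
  have K1: "K \<ge> 1" unfolding K_def using c by (simp add: one_le_power)
  have Y_bounds: "Ylow \<le> Y" "Y \<le> l * K / L" "\<And>p. p \<in> P \<Longrightarrow> t_pp x p 1 / sqrt (real p) \<le> 1 / l"
    using sum_t_pp_div_sqrt_primes_bounds[OF l3 c, of J] L8 W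
    unfolding Ylow_def Y_def P_def W_def K_def l_def L_def by auto
  have T0: "0 \<le> 3 * l * LL / (L * K)" using l0 LL1 L8 K1 by simp
  have "real k \<ge> 3 * l * LL / (L * K) - 1"
    unfolding k_def using T0 real_of_int_floor_gt_diff_one[of "3 * l * LL / (L * K)"] by simp
  hence kge: "real k \<ge> 4 * Y + 1" using Y_bounds(2) k unfolding K_def by linarith
  have "real k \<le> 3 * l * LL / (L * K)" unfolding k_def using T0 by (rule of_nat_floor)
  hence "real k * (L * K) \<le> 3 * l * LL" using L8 K1 by (simp add: pos_le_divide_eq)
  hence "W ^ k \<le> exp (ln z)"
    unfolding W_def using z(2) by (simp add: exp_of_nat_mult[symmetric] mult_ac)
  hence Wk: "W ^ k \<le> z" using z(1) by simp
  define S where "S = (\<Sum>m\<in>nats_le z. t_fun x m / sqrt (real m))"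
  have "exp ((1 - 1 / l) * Y) / 2 \<le> S"
    unfolding S_def l_def Y_def
  proof (rule sum_t_fun_div_sqrt_ge_exp)
    show "\<And>p. p \<in> P \<Longrightarrow> prime p \<and> real p \<le> W \<and> t_pp x p 1 / sqrt (real p) \<le> 1 / lam x"
      using Y_bounds(3) unfolding P_def primes_between_def l_def by auto
    show "1 \<le> W" unfolding W_def using L8 K1 by simp
  qed (use l3 kge Wk in \<open>auto simp: P_def Y_def\<close>)
  hence "exp (2 * (1 - 1 / l) * Y) / 4 \<le> S\<^sup>2"
    using power_mono[of "exp ((1 - 1 / l) * Y) / 2" S 2]
    by (simp add: power2_eq_square exp_add[symmetric] algebra_simps)
  moreover have "exp (2 * (1 - 1 / l) * Ylow) \<le> exp (2 * (1 - 1 / l) * Y)"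
  proof -
    have "1 / l \<le> 1" using l0 by simp
    hence "0 \<le> 2 * (1 - 1 / l)" by simp
    thus ?thesis using Y_bounds(1) by (simp only: exp_le_cancel_iff mult_left_mono)
  qed
  ultimately show ?thesis unfolding S_def by linarith
qed

text \<open>The bound of the previous section loses a factor \<open>ln z\<close>, so it is applied at the height
  \<open>z\<^sub>1 = min z (exp (4 \<lambda> ln ln \<lambda>))\<close>, which still exceeds every product of \<open>k\<close> of the chosen primes.\<close>

lemma coprime_pair_sum_ge_exp:
  fixes x z c :: real and J :: nat
  defines "l \<equiv> lam x" and "L \<equiv> ln (lam x ^ 2)" and "LL \<equiv> ln (ln (lam x))"
  defines "Ylow \<equiv> (1 - 1 / L\<^sup>2) * l * ((1 - (1 / c) ^ J) / (c * L) - 8 * real J / L\<^sup>2)"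
  assumes l3: "lam x \<ge> 3" and c: "c > 1" and L8: "L \<ge> 8" and LL1: "LL \<ge> 1"
    and W: "L * c ^ J \<le> (ln l)\<^sup>2"
    and k: "4 * l * c ^ J / L + 2 \<le> 3 * l * LL / (L * c ^ J)"
    and z: "z \<ge> 1" "ln z > 3 * l * LL"
  shows "ln 2 / (8 * exp 2) / (16 * l * LL) * exp (2 * (1 - 1 / l) * Ylow)
         \<le> sum (pair_weight (t_fun x)) (coprime_pairs z)"
proof -
  define z1 where "z1 = min z (exp (4 * (l * LL)))"
  define C where "C = ln 2 / (8 * exp 2 :: real)"
  define S where "S = (\<Sum>m\<in>nats_le z1. t_fun x m / sqrt (real m))"
  have l0: "l \<ge> 3" using l3 unfolding l_def .
  have C0: "C > 0" unfolding C_def by simp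
  have lLL: "3 \<le> l * LL" using mult_mono[of 3 l 1 LL] l0 LL1 by simp
  have "ln z > 3 * (l * LL)" using z(2) by (simp add: mult.assoc)
  note z1 = truncation_bounds[OF lLL z(1) this, folded z1_def]
  have lnz1: "1 < ln z1" using z1(1) lLL by linarith
  have "exp (2 * (1 - 1 / l) * Ylow) / 4 \<le> S\<^sup>2"
    unfolding S_def Ylow_def
    using sum_t_fun_div_sqrt_sq_ge_exp[where x = x and z = z1 and c = c and J = J] l3 c L8 LL1 W k z1(1,3)
    unfolding l_def L_def LL_def by (simp add: mult.assoc)
  moreover have "C / (4 * l * LL) \<le> C / ln z1"
    using z1 lnz1 l0 LL1 C0 by (intro divide_left_mono) (auto intro!: mult_pos_pos)
  ultimately have "C / (4 * l * LL) * (exp (2 * (1 - 1 / l) * Ylow) / 4) \<le> C / ln z1 * S\<^sup>2"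
    using C0 lnz1 by (intro mult_mono) auto
  hence "C / (16 * l * LL) * exp (2 * (1 - 1 / l) * Ylow) \<le> C / ln z1 * S\<^sup>2" by simp
  also have "\<dots> \<le> sum (pair_weight (t_fun x)) (coprime_pairs z1)"
  proof -
    have "3 * 1 \<le> l * l" using l0 by (intro mult_mono) auto
    thus ?thesis unfolding C_def S_def using l0
      by (intro coprime_pair_sum_ge z1(3)) (auto simp: l_def power2_eq_square)
  qed
  also have "\<dots> \<le> sum (pair_weight (t_fun x)) (coprime_pairs z)"
    using l0 by (intro sum_pair_weight_coprime_pairs_mono t_fun_nonneg) (auto simp: l_def z1_def)
  finally show ?thesis unfolding C_def .
qed

section \<open>Asymptotics in \<open>\<lambda>\<close>\<close>

lemma geometric_main_term_ge:
  fixes l e c :: real and J :: nat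
  assumes e: "0 < e" "e \<le> 1" and c: "c = 1 + e / 4" and J: "(1 / c) ^ J < e / 4"
    and l: "4 \<le> ln l" "32 * real J / e \<le> ln l" "1 \<le> l / ln l"
  shows "(1 - 5 * e / 8) * (l / ln l)
         \<le> 2 * l * ((1 - (1 / c) ^ J) / (c * ln (l\<^sup>2)) - 8 * real J / (ln (l\<^sup>2))\<^sup>2)"
proof -
  define q where "q = l / ln l"
  have "ln l \<le> l" using l(1,3) by (simp add: le_divide_eq)
  hence l0: "l > 0" using l(1) by linarith
  have L: "ln (l\<^sup>2) = 2 * ln l" using l0 by (simp add: ln_realpow)
  have c1: "c \<ge> 1" unfolding c using e by simp
  have q1: "q \<ge> 1" using l(3) unfolding q_def .
  have "(1 - e / 2) * c \<le> 1 - e / 4" unfolding c using e by (simp add: algebra_simps)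
  hence "1 - e / 2 \<le> (1 - (1 / c) ^ J) / c" using J c1 by (simp add: pos_le_divide_eq)
  hence "(1 - e / 2) * q \<le> (1 - (1 / c) ^ J) / c * q" using q1 by (intro mult_right_mono) auto
  also have "(1 - (1 / c) ^ J) / c * q = 2 * l * ((1 - (1 / c) ^ J) / (c * ln (l\<^sup>2)))"
    unfolding q_def L using l(1) c1 by (simp add: field_simps)
  finally have A: "(1 - e / 2) * q \<le> 2 * l * ((1 - (1 / c) ^ J) / (c * ln (l\<^sup>2)))" .
  have "2 * l * (8 * real J / (ln (l\<^sup>2))\<^sup>2) = (4 * real J / ln l) * q"
    unfolding q_def L using l(1) by (simp add: field_simps power2_eq_square)
  also have "\<dots> \<le> e / 8 * q"
    using l(1,2) e q1 by (intro mult_right_mono) (auto simp: divide_simps mult_ac)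
  finally show ?thesis using A unfolding q_def by (simp add: algebra_simps)
qed

lemma exponent_ge:
  fixes l e c :: real and J :: nat
  defines "L \<equiv> ln (l\<^sup>2)"
  assumes e: "0 < e" "e \<le> 1" and c: "c = 1 + e / 4" and J: "(1 / c) ^ J < e / 4"
    and l: "16 / e \<le> l" "4 \<le> ln l" "32 * real J / e \<le> ln l" "8 / e \<le> ln l" "1 \<le> l / ln l"
  shows "(1 - 3 * e / 4) * (l / ln l)
         \<le> 2 * (1 - 1 / l) * ((1 - 1 / L\<^sup>2) * l * ((1 - (1 / c) ^ J) / (c * L) - 8 * real J / L\<^sup>2))"
proof -
  define q where "q = l / ln l"
  define X where "X = 2 * l * ((1 - (1 / c) ^ J) / (c * L) - 8 * real J / L\<^sup>2)"
  define fct where "fct = (1 - 1 / l) * (1 - 1 / L\<^sup>2)"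
  have "16 \<le> 16 / e" using e by (simp add: divide_simps)
  hence l0: "l \<ge> 16" using l(1) by linarith
  have q1: "q \<ge> 1" using l(5) unfolding q_def .
  have X: "(1 - 5 * e / 8) * q \<le> X"
    unfolding X_def q_def L_def using geometric_main_term_ge[OF e c J l(2,3,5)] .
  have X_low0: "(1 - 5 * e / 8) * q \<ge> 0" using e q1 by simp
  have "1 / l \<le> e / 16" using l(1) e l0 by (simp add: divide_simps mult_ac)
  moreover have "1 / L\<^sup>2 \<le> e / 16"
  proof -
    have L: "L = 2 * ln l" "L \<ge> 16 / e" "L \<ge> 1" unfolding L_def using l0 l(2,4) by (auto simp: ln_realpow)
    hence "1 / L\<^sup>2 \<le> 1 / L" by (simp add: divide_simps power2_eq_square)
    also have "1 / L \<le> e / 16" using L e by (simp add: divide_simps mult_ac)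
    finally show ?thesis .
  qed
  moreover have "0 \<le> 1 / l" "0 \<le> 1 / L\<^sup>2" using l0 by auto
  moreover have "fct = 1 - 1 / l - 1 / L\<^sup>2 + (1 / l) * (1 / L\<^sup>2)"
  proof -
    have "(1 - a) * (1 - b) = 1 - a - b + a * b" for a b :: real by (simp add: algebra_simps)
    thus ?thesis unfolding fct_def .
  qed
  ultimately have fct: "fct \<ge> 1 - e / 8"
    using mult_nonneg_nonneg[of "1 / l" "1 / L\<^sup>2"] by linarith
  have "(1 - 3 * e / 4) * q \<le> (1 - e / 8) * ((1 - 5 * e / 8) * q)"
    using e q1 by (simp add: algebra_simps mult_right_mono)
  also have "\<dots> \<le> fct * X"
    using fct X X_low0 e by (intro mult_mono) auto
  also have "fct * X = 2 * (1 - 1 / l) * ((1 - 1 / L\<^sup>2) * l * ((1 - (1 / c) ^ J) / (c * L) - 8 * real J / L\<^sup>2))"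
  proof -
    have "((1 - a) * (1 - b)) * (2 * l * w) = 2 * (1 - a) * ((1 - b) * l * w)" for a b w :: real
      by (simp add: algebra_simps)
    thus ?thesis unfolding fct_def X_def .
  qed
  finally show ?thesis unfolding q_def .
qed

lemma ln_prefactor_ge:
  fixes l e C :: real
  assumes C: "C > 0" and e: "e > 0" and l: "3 \<le> l" "4 \<le> ln l" "1 \<le> ln (ln l)" "1 \<le> l / ln l"
    and small: "ln (l * ln (ln l)) * ln l / l < e / 16" "ln l / l < e / (16 * (\<bar>ln 16 - ln C\<bar> + 1))"
  shows "- (e / 8) * (l / ln l) \<le> ln (C / (16 * l * ln (ln l)))"
proof -
  define q where "q = l / ln l"
  have lLL: "l * ln (ln l) > 0" using l by simp
  have "ln (C / (16 * l * ln (ln l))) = ln C - ln 16 - ln (l * ln (ln l))"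
    using C lLL l by (simp add: ln_div ln_mult mult.assoc)
  moreover have "ln (l * ln (ln l)) < e / 16 * q"
    using small(1) l unfolding q_def by (simp add: divide_simps mult_ac)
  moreover have "ln 16 - ln C \<le> e / 16 * q"
  proof -
    define K where "K = \<bar>ln 16 - ln C\<bar> + 1"
    have K: "K \<ge> 1" unfolding K_def by simp
    have q0: "q > 0" using l(4) unfolding q_def by simp
    have "1 / q < e / (16 * K)" using small(2) unfolding K_def q_def by simp
    hence "16 * K < e * q" using q0 K by (simp add: divide_simps mult_ac)
    hence "K < e / 16 * q" by simp
    thus ?thesis unfolding K_def by linarith
  qed
  ultimately show ?thesis unfolding q_def by linarith
qed

lemma large_z_parameters:
  fixes l K :: real
  assumes K: "K \<ge> 1" and l: "4 \<le> ln l" "2 * K \<le> ln l" "1 \<le> l / ln l"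
    "(2 * K + 2) * (2 * K) / 3 \<le> ln (ln l)"
  shows "8 \<le> ln (l\<^sup>2)" "ln (l\<^sup>2) * K \<le> (ln l)\<^sup>2"
    "4 * l * K / ln (l\<^sup>2) + 2 \<le> 3 * l * ln (ln l) / (ln (l\<^sup>2) * K)"
proof -
  define q where "q = l / ln l"
  have q1: "q \<ge> 1" using l(3) unfolding q_def .
  have "ln l \<le> l" using l(1,3) by (simp add: le_divide_eq)
  hence L: "ln (l\<^sup>2) = 2 * ln l" using l(1) by (simp add: ln_realpow)
  show "8 \<le> ln (l\<^sup>2)" using L l(1) by simp
  show "ln (l\<^sup>2) * K \<le> (ln l)\<^sup>2"
    using mult_right_mono[OF l(2), of "ln l"] l(1) unfolding L by (simp add: power2_eq_square mult_ac)
  have "2 * K + 2 \<le> 3 * ln (ln l) / (2 * K)" using l(4) K by (simp add: pos_le_divide_eq mult_ac)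
  hence "(2 * K + 2) * q \<le> 3 * ln (ln l) / (2 * K) * q" using q1 by (intro mult_right_mono) auto
  moreover have "2 * K * q + 2 \<le> (2 * K + 2) * q" using q1 by (simp add: algebra_simps)
  moreover have "4 * l * K / ln (l\<^sup>2) = 2 * K * q" "3 * l * ln (ln l) / (ln (l\<^sup>2) * K) = 3 * ln (ln l) / (2 * K) * q"
    unfolding L q_def using l(1) K by (simp_all add: field_simps)
  ultimately show "4 * l * K / ln (l\<^sup>2) + 2 \<le> 3 * l * ln (ln l) / (ln (l\<^sup>2) * K)" by linarith
qed

lemma coprime_pair_sum_ge_exp_lam:
  fixes x z e :: real and J :: nat
  defines "l \<equiv> lam x" and "c \<equiv> 1 + e / 4"
  assumes e: "0 < e" "e \<le> 1" and J: "(1 / c) ^ J < e / 4"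
    and l: "16 / e \<le> l" "4 \<le> ln l" "2 * c ^ J \<le> ln l" "32 * real J / e \<le> ln l" "8 / e \<le> ln l"
      "1 \<le> ln (ln l)" "(2 * c ^ J + 2) * (2 * c ^ J) / 3 \<le> ln (ln l)" "1 \<le> l / ln l"
      "ln (l * ln (ln l)) * ln l / l < e / 16"
      "ln l / l < e / (16 * (\<bar>ln 16 - ln (ln 2 / (8 * exp 2))\<bar> + 1))"
    and z: "z \<ge> 1" "ln z > 3 * l * ln (ln l)"
  shows "exp ((1 - e) * l / ln l) \<le> sum (pair_weight (t_fun x)) (coprime_pairs z)"
proof -
  define L where "L = ln (l\<^sup>2)"
  define C where "C = ln 2 / (8 * exp 2 :: real)"
  define E where "E = 2 * (1 - 1 / l) * ((1 - 1 / L\<^sup>2) * l * ((1 - (1 / c) ^ J) / (c * L) - 8 * real J / L\<^sup>2))"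
  have "16 \<le> 16 / e" using e by (simp add: divide_simps)
  hence l3: "3 \<le> l" using l(1) by linarith
  have c: "c > 1" "c ^ J \<ge> 1" unfolding c_def using e by (simp_all add: one_le_power)
  note par = large_z_parameters[OF c(2) l(2,3,8,7), folded L_def]
  have "C / (16 * l * ln (ln l)) * exp E \<le> sum (pair_weight (t_fun x)) (coprime_pairs z)"
    unfolding C_def E_def L_def l_def
    using coprime_pair_sum_ge_exp[of x c J z] l3 c par l(6) z unfolding l_def L_def by simp
  moreover have "(1 - e) * l / ln l \<le> ln (C / (16 * l * ln (ln l))) + E"
  proof -
    have "(1 - 3 * e / 4) * (l / ln l) \<le> E"
      unfolding E_def L_def using exponent_ge[OF e _ J l(1,2,4,5,8)] by (simp add: c_def)
    moreover have "- (e / 8) * (l / ln l) \<le> ln (C / (16 * l * ln (ln l)))"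
      unfolding C_def using ln_prefactor_ge[OF _ e(1) l3 l(2,6,8,9,10)] by simp
    moreover have "(1 - e) * (l / ln l) \<le> (- (e / 8) + (1 - 3 * e / 4)) * (l / ln l)"
      using e l(8) by (intro mult_right_mono) auto
    moreover have "(1 - e) * l / ln l = (1 - e) * (l / ln l)" by simp
    ultimately show ?thesis by (simp only: distrib_right)
  qed
  moreover have "C / (16 * l * ln (ln l)) > 0" unfolding C_def using l3 l(6) l(2) by (intro divide_pos_pos mult_pos_pos) auto
  ultimately show ?thesis by (smt (verit) exp_add exp_le_cancel_iff exp_ln)
qed

lemma lam_at_top: "filterlim lam at_top at_top"
proof -
  have "filterlim (\<lambda>x::real. sqrt (ln x * ln (ln x))) at_top at_top" by real_asymp
  thus ?thesis unfolding lam_def[abs_def] .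
qed

lemma eventually_lam: "eventually P at_top \<Longrightarrow> eventually (\<lambda>x. P (lam x)) at_top"
  using lam_at_top unfolding filterlim_iff by blast

lemma coprime_pair_sum_ge_uniform:
  "\<exists>C>0. \<exists>X0. \<forall>x\<ge>X0. \<forall>z. z \<ge> 2 \<longrightarrow>
     C / ln z * (\<Sum>m\<in>nats_le z. t_fun x m / sqrt (real m)) ^ 2 \<le> sum (pair_weight (t_fun x)) (coprime_pairs z)"
proof -
  obtain X0 where X0: "\<And>x. x \<ge> X0 \<Longrightarrow> 2 \<le> lam x"
    using eventually_lam[OF eventually_ge_at_top[of 2]] unfolding eventually_at_top_linorder by blast
  have "ln 2 / (8 * exp 2) / ln z * (\<Sum>m\<in>nats_le z. t_fun x m / sqrt (real m)) ^ 2
        \<le> sum (pair_weight (t_fun x)) (coprime_pairs z)" if "x \<ge> X0" "z \<ge> 2" for x z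
  proof (rule coprime_pair_sum_ge)
    show "0 \<le> lam x" using X0[OF that(1)] by simp
    show "3 \<le> lam x ^ 2"
      using mult_mono[OF X0[OF that(1)] X0[OF that(1)]] X0[OF that(1)] by (simp add: power2_eq_square)
  qed (rule that(2))
  moreover have "ln 2 / (8 * exp 2 :: real) > 0" by simp
  ultimately show ?thesis by blast
qed

lemma eventually_large_l:
  fixes e D K :: real and J :: nat
  assumes e: "e > 0" and D: "D > 0"
  shows "eventually (\<lambda>l. 16 / e \<le> l \<and> 4 \<le> ln l \<and> 2 * K \<le> ln l \<and> 32 * real J / e \<le> ln l \<and> 8 / e \<le> ln l
      \<and> 1 \<le> ln (ln l) \<and> (2 * K + 2) * (2 * K) / 3 \<le> ln (ln l) \<and> 1 \<le> l / ln l
      \<and> ln (l * ln (ln l)) * ln l / l < e / 16 \<and> ln l / l < e / (16 * D)) at_top"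
proof -
  have lim: "filterlim (\<lambda>l::real. ln l) at_top at_top" "filterlim (\<lambda>l::real. ln (ln l)) at_top at_top"
    "((\<lambda>l::real. ln (l * ln (ln l)) * ln l / l) \<longlongrightarrow> 0) at_top" "((\<lambda>l::real. ln l / l) \<longlongrightarrow> 0) at_top"
    by real_asymp+
  have ev_ln: "eventually (\<lambda>l::real. M \<le> ln l) at_top"
    and ev_lnln: "eventually (\<lambda>l::real. M \<le> ln (ln l)) at_top" for M
    using lim(1,2) unfolding filterlim_at_top by blast+
  have "eventually (\<lambda>l::real. 1 \<le> l / ln l) at_top" by real_asymp
  moreover have "eventually (\<lambda>l. ln (l * ln (ln l)) * ln l / l < e / 16) at_top"
    using order_tendstoD(2)[OF lim(3), of "e / 16"] e by simp
  moreover have "eventually (\<lambda>l. ln l / l < e / (16 * D)) at_top"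
    using order_tendstoD(2)[OF lim(4), of "e / (16 * D)"] e D by simp
  ultimately show ?thesis
    using eventually_ge_at_top[of "16 / e"] ev_ln[of 4] ev_ln[of "2 * K"] ev_ln[of "32 * real J / e"]
      ev_ln[of "8 / e"] ev_lnln[of 1] ev_lnln[of "(2 * K + 2) * (2 * K) / 3"]
    by eventually_elim blast
qed

lemma coprime_pair_sum_ge_exp_eventually:
  assumes "\<epsilon> > 0"
  shows "\<exists>X0. \<forall>x\<ge>X0. \<forall>z. z \<ge> 1 \<longrightarrow> ln z > 3 * lam x * ln (ln (lam x)) \<longrightarrow>
           exp ((1 - \<epsilon>) * lam x / ln (lam x)) \<le> sum (pair_weight (t_fun x)) (coprime_pairs z)"
proof -
  define e where "e = min \<epsilon> 1"
  have e: "0 < e" "e \<le> 1" "e \<le> \<epsilon>" unfolding e_def using assms by auto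
  define c where "c = 1 + e / 4"
  obtain J where J: "(1 / c) ^ J < e / 4"
    using real_arch_pow_inv[of "e / 4" "1 / c"] e unfolding c_def by auto
  define K where "K = c ^ J"
  define D :: real where "D = \<bar>ln 16 - ln (ln 2 / (8 * exp 2))\<bar> + 1"
  have D: "D > 0" unfolding D_def by (simp add: add_pos_nonneg)
  have "eventually (\<lambda>x. \<forall>z. z \<ge> 1 \<longrightarrow> ln z > 3 * lam x * ln (ln (lam x)) \<longrightarrow>
           exp ((1 - \<epsilon>) * lam x / ln (lam x)) \<le> sum (pair_weight (t_fun x)) (coprime_pairs z)) at_top"
    using eventually_lam[OF eventually_large_l[OF e(1) D, of K J]]
  proof eventually_elim
    case (elim x)
    show ?case
    proof (intro allI impI)
      fix z :: real assume z: "1 \<le> z" "ln z > 3 * lam x * ln (ln (lam x))"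
      have "exp ((1 - e) * lam x / ln (lam x)) \<le> sum (pair_weight (t_fun x)) (coprime_pairs z)"
        by (rule coprime_pair_sum_ge_exp_lam[OF e(1,2) J[unfolded c_def]])
           (use elim z in \<open>simp_all add: K_def D_def c_def\<close>)
      moreover have "(1 - \<epsilon>) * (lam x / ln (lam x)) \<le> (1 - e) * (lam x / ln (lam x))"
        using elim e by (intro mult_right_mono) auto
      hence "exp ((1 - \<epsilon>) * lam x / ln (lam x)) \<le> exp ((1 - e) * lam x / ln (lam x))" by simp
      ultimately show "exp ((1 - \<epsilon>) * lam x / ln (lam x)) \<le> sum (pair_weight (t_fun x)) (coprime_pairs z)"
        by linarith
    qed
  qed
  thus ?thesis unfolding eventually_at_top_linorder by blast
qed

theorem mainTheorem14:
  shows "(\<exists>C>0. \<exists>X0. \<forall>x\<ge>X0. \<forall>z::real. z \<ge> 2 \<longrightarrow>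
            (\<Sum>(m1, m2) \<in> {(m1, m2). 1 \<le> m1 \<and> real m1 \<le> z \<and> 1 \<le> m2 \<and> real m2 \<le> z \<and> coprime m1 m2}.
               t_fun x m1 * t_fun x m2 * real m1 * real m2 / real (max m1 m2) ^ 3)
            \<ge> C / ln z * (\<Sum>m \<in> {m. 1 \<le> m \<and> real m \<le> z}. t_fun x m / sqrt (real m)) ^ 2)
       \<and> (\<forall>\<epsilon>>0. \<exists>X0. \<forall>x\<ge>X0. \<forall>z::real. z \<ge> 1 \<longrightarrow>
            ln z > 3 * lam x * ln (ln (lam x)) \<longrightarrow>
            (\<Sum>(m1, m2) \<in> {(m1, m2). 1 \<le> m1 \<and> real m1 \<le> z \<and> 1 \<le> m2 \<and> real m2 \<le> z \<and> coprime m1 m2}.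
               t_fun x m1 * t_fun x m2 * real m1 * real m2 / real (max m1 m2) ^ 3)
            \<ge> exp ((1 - \<epsilon>) * lam x / ln (lam x)))"
  using coprime_pair_sum_ge_uniform coprime_pair_sum_ge_exp_eventually
  unfolding pair_weight_def coprime_pairs_def nats_le_def by blast

end
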